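(* Let $\Omega\subset\mathbb R^d$ be bounded open, $g\in L^\infty(\mathbb R^d)$ with $0<g\le1$ a.e., and let $u$ be a twisted eigenfunction corresponding to $\lambda_1^g(\Omega)$ with exactly two nodal domains $\Omega^+=\{u>0\}$ and $\Omega^-=\{u<0\}$. Let $u^+=u\chi_{\Omega^+}$, $u^-=-u\chi_{\Omega^-}$, and let $\xi\in\mathbb R$ be the number such that $\int_\Omega\nabla u\cdot\nabla\psi\,dx=\lambda_1^g(\Omega)\int_\Omega u\psi\,dx+\xi\int_\Omega g\psi\,dx$ for all $\psi\in H^1_0(\Omega)$. Then $\mathcal R(u^+)\le\mathcal R(u^-)$ if and only if $\xi\le0$; and $\mathcal R(u^+)=\mathcal R(u^-)$ if and only if $\xi=0$ (i.e., $u$ is a Dirichlet eigenfunction).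
   Context: $\mathcal R(w)=\int|\nabla w|^2/\int w^2$. $\lambda_1^g(\Omega)=\min\{\mathcal R(u):u\in H^1_0(\Omega)\setminus\{0\},\int_\Omega ug=0\}$; twisted eigenfunctions are minimizers. Nodal domains are connected components of the nonvanishing set of the (continuous) function. *)

theory Defs
  imports "HOL-Analysis.Analysis"
begin

definition C1c :: "'a::euclidean_space set \<Rightarrow> ('a \<Rightarrow> real) \<Rightarrow> ('a \<Rightarrow> 'a) \<Rightarrow> bool" where
  "C1c \<Omega> \<phi> D\<phi> \<longleftrightarrow>
     (\<forall>x. (\<phi> has_derivative (\<lambda>h. D\<phi> x \<bullet> h)) (at x)) \<and>
     continuous_on UNIV D\<phi> \<and>
     compact (closure {x. \<phi> x \<noteq> 0}) \<and> closure {x. \<phi> x \<noteq> 0} \<subseteq> \<Omega>"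

text \<open>u belongs to H^1_0(\<Omega>) (functions on R^d, the closure of C^1_c(\<Omega>) in the
  H^1 norm) and G is its weak gradient.\<close>
definition H10 :: "'a::euclidean_space set \<Rightarrow> ('a \<Rightarrow> real) \<Rightarrow> ('a \<Rightarrow> 'a) \<Rightarrow> bool" where
  "H10 \<Omega> u G \<longleftrightarrow>
     u \<in> borel_measurable lebesgue \<and> G \<in> borel_measurable lebesgue \<and>
     (\<exists>\<phi> D\<phi>. (\<forall>n. C1c \<Omega> (\<phi> n) (D\<phi> n)) \<and>
        (\<lambda>n. \<integral>\<^sup>+ x. ennreal ((\<phi> n x - u x)\<^sup>2) \<partial>lebesgue) \<longlonglongrightarrow> 0 \<and>
        (\<lambda>n. \<integral>\<^sup>+ x. ennreal ((norm (D\<phi> n x - G x))\<^sup>2) \<partial>lebesgue) \<longlonglongrightarrow> 0)"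

definition H10set :: "'a::euclidean_space set \<Rightarrow> ('a \<Rightarrow> real) set" where
  "H10set \<Omega> = {u. \<exists>G. H10 \<Omega> u G}"

text \<open>The weak gradient (unique up to null sets).\<close>
definition wgrad :: "'a::euclidean_space set \<Rightarrow> ('a \<Rightarrow> real) \<Rightarrow> ('a \<Rightarrow> 'a)" where
  "wgrad \<Omega> u = (SOME G. H10 \<Omega> u G)"

definition Rq :: "'a::euclidean_space set \<Rightarrow> ('a \<Rightarrow> real) \<Rightarrow> real" where
  "Rq \<Omega> w = (\<integral> x. (norm (wgrad \<Omega> w x))\<^sup>2 \<partial>lebesgue) / (\<integral> x. (w x)\<^sup>2 \<partial>lebesgue)"

definition twisted_adm :: "'a::euclidean_space set \<Rightarrow> ('a \<Rightarrow> real) \<Rightarrow> ('a \<Rightarrow> real) \<Rightarrow> bool" where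
  "twisted_adm \<Omega> g v \<longleftrightarrow> v \<in> H10set \<Omega> \<and> \<not> (AE x in lebesgue. v x = 0) \<and>
     (LINT x:\<Omega>|lebesgue. v x * g x) = 0"

definition lambda1g :: "'a::euclidean_space set \<Rightarrow> ('a \<Rightarrow> real) \<Rightarrow> real" where
  "lambda1g \<Omega> g = Inf {Rq \<Omega> v | v. twisted_adm \<Omega> g v}"

definition twisted_eigenfunction :: "'a::euclidean_space set \<Rightarrow> ('a \<Rightarrow> real) \<Rightarrow> ('a \<Rightarrow> real) \<Rightarrow> bool" where
  "twisted_eigenfunction \<Omega> g u \<longleftrightarrow> twisted_adm \<Omega> g u \<and> Rq \<Omega> u = lambda1g \<Omega> g"

definition nodal_domains :: "'a::euclidean_space set \<Rightarrow> ('a \<Rightarrow> real) \<Rightarrow> 'a set set" where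
  "nodal_domains \<Omega> u = components {x \<in> \<Omega>. u x \<noteq> 0}"

end

theory Submission
  imports Defs
begin

(* Testing the Euler-Lagrange equation with u+ and with u- gives
     R(u+) = lambda + xi * (INT g u+) / (INT (u+)^2),   R(u-) = lambda - xi * (INT g u-) / (INT (u-)^2),
   and both ratios are positive, since u+ and u- are positive on nonempty open nodal domains and g > 0.
   The rest is Sobolev background for H^1_0 (the H^1-closure of C^1_c): it is closed under u |-> u+ with
   gradient chi_{u>0} grad u (chain rule along the C^1 approximations sqrt (max t 0 ^ 2 + e^2) - e of
   max t 0), and the weak gradient is unique almost everywhere (integration by parts against polynomial
   vector fields, which are dense by Stone-Weierstrass), so wgrad of u+ and u- is the expected one. *)

section \<open>Squared \<open>L\<^sup>2\<close> distance\<close>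

definition L2_sqdist :: "('x \<Rightarrow> 'b::real_normed_vector) \<Rightarrow> ('x \<Rightarrow> 'b) \<Rightarrow> 'x measure \<Rightarrow> ennreal" where
  "L2_sqdist f g M = (\<integral>\<^sup>+x. ennreal ((norm (f x - g x))\<^sup>2) \<partial>M)"

lemma L2_sqdist_commute: "L2_sqdist f g M = L2_sqdist g f M"
  unfolding L2_sqdist_def by (simp add: norm_minus_commute)

lemma L2_sqdist_triangle:
  fixes a b c :: "'x \<Rightarrow> 'b::euclidean_space"
  assumes [measurable]: "a \<in> borel_measurable M" "b \<in> borel_measurable M" "c \<in> borel_measurable M"
  shows "L2_sqdist a c M \<le> 2 * L2_sqdist a b M + 2 * L2_sqdist b c M"
proof -
  have "ennreal ((norm (a x - c x))\<^sup>2)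
      \<le> 2 * ennreal ((norm (a x - b x))\<^sup>2) + 2 * ennreal ((norm (b x - c x))\<^sup>2)" for x
  proof -
    have "norm (a x - c x) \<le> norm (a x - b x) + norm (b x - c x)"
      using norm_triangle_ineq[of "a x - b x" "b x - c x"] by simp
    then have "(norm (a x - c x))\<^sup>2 \<le> (norm (a x - b x) + norm (b x - c x))\<^sup>2"
      by (simp add: power_mono)
    also have "\<dots> \<le> 2 * (norm (a x - b x))\<^sup>2 + 2 * (norm (b x - c x))\<^sup>2"
      by (simp add: power2_sum) (smt (verit) sum_squares_ge_zero power2_diff zero_le_power2)
    finally have "ennreal ((norm (a x - c x))\<^sup>2)
        \<le> ennreal (2 * (norm (a x - b x))\<^sup>2 + 2 * (norm (b x - c x))\<^sup>2)"
      by (rule ennreal_leI)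
    then show ?thesis
      by (simp add: ennreal_plus ennreal_mult)
  qed
  then have "L2_sqdist a c M \<le>
      (\<integral>\<^sup>+x. 2 * ennreal ((norm (a x - b x))\<^sup>2) + 2 * ennreal ((norm (b x - c x))\<^sup>2) \<partial>M)"
    unfolding L2_sqdist_def by (rule nn_integral_mono)
  also have "\<dots> = 2 * L2_sqdist a b M + 2 * L2_sqdist b c M"
    unfolding L2_sqdist_def by (simp add: nn_integral_add nn_integral_cmult)
  finally show ?thesis .
qed

lemma L2_sqdist_tendsto_0_trans:
  fixes a b c :: "nat \<Rightarrow> 'x \<Rightarrow> 'b::euclidean_space"
  assumes "\<And>n. a n \<in> borel_measurable M" "\<And>n. b n \<in> borel_measurable M" "\<And>n. c n \<in> borel_measurable M"
    and ab: "(\<lambda>n. L2_sqdist (a n) (b n) M) \<longlonglongrightarrow> 0" and bc: "(\<lambda>n. L2_sqdist (b n) (c n) M) \<longlonglongrightarrow> 0"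
  shows "(\<lambda>n. L2_sqdist (a n) (c n) M) \<longlonglongrightarrow> 0"
proof (rule tendsto_sandwich[OF _ _ tendsto_const])
  show "(\<lambda>n. 2 * L2_sqdist (a n) (b n) M + 2 * L2_sqdist (b n) (c n) M) \<longlonglongrightarrow> 0"
    using tendsto_add[OF ennreal_tendsto_cmult[OF _ ab] ennreal_tendsto_cmult[OF _ bc]] by simp
qed (use L2_sqdist_triangle[OF assms(1-3)] in auto)

lemma integrable_norm_square_iff_L2_sqdist:
  fixes f :: "'x \<Rightarrow> 'b::euclidean_space"
  assumes "f \<in> borel_measurable M"
  shows "integrable M (\<lambda>x. (norm (f x))\<^sup>2) \<longleftrightarrow> L2_sqdist f (\<lambda>_. 0) M < \<infinity>"
proof
  assume "integrable M (\<lambda>x. (norm (f x))\<^sup>2)"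
  then have "L2_sqdist f (\<lambda>_. 0) M = ennreal (\<integral>x. (norm (f x))\<^sup>2 \<partial>M)"
    unfolding L2_sqdist_def by (simp add: nn_integral_eq_integral)
  then show "L2_sqdist f (\<lambda>_. 0) M < \<infinity>" by simp
next
  assume "L2_sqdist f (\<lambda>_. 0) M < \<infinity>"
  then show "integrable M (\<lambda>x. (norm (f x))\<^sup>2)"
    unfolding L2_sqdist_def using assms by (intro integrableI_nonneg) auto
qed

lemma integrable_norm_square_if_L2_sqdist_finite:
  fixes f g :: "'x \<Rightarrow> 'b::euclidean_space"
  assumes [measurable]: "f \<in> borel_measurable M" "g \<in> borel_measurable M"
    and "L2_sqdist f g M < \<infinity>" "integrable M (\<lambda>x. (norm (g x))\<^sup>2)"
  shows "integrable M (\<lambda>x. (norm (f x))\<^sup>2)"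
proof -
  have "L2_sqdist g (\<lambda>_. 0) M < \<infinity>"
    using assms(4) integrable_norm_square_iff_L2_sqdist[OF assms(2)] by blast
  then have "2 * L2_sqdist f g M + 2 * L2_sqdist g (\<lambda>_. 0) M < \<infinity>"
    using assms(3) by (simp add: ennreal_mult_less_top)
  then have "L2_sqdist f (\<lambda>_. 0) M < \<infinity>"
    by (rule order.strict_trans1[OF L2_sqdist_triangle[OF assms(1,2) borel_measurable_const]])
  then show ?thesis
    using integrable_norm_square_iff_L2_sqdist[OF assms(1)] by blast
qed

lemma integrable_norm_square_diff:
  fixes f g :: "'x \<Rightarrow> 'b::euclidean_space"
  assumes [measurable]: "f \<in> borel_measurable M" "g \<in> borel_measurable M"
    and "integrable M (\<lambda>x. (norm (f x))\<^sup>2)" "integrable M (\<lambda>x. (norm (g x))\<^sup>2)"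
  shows "integrable M (\<lambda>x. (norm (f x - g x))\<^sup>2)"
proof -
  have "L2_sqdist f (\<lambda>_. 0) M < \<infinity>"
    using assms(3) integrable_norm_square_iff_L2_sqdist[OF assms(1)] by blast
  moreover have "L2_sqdist (\<lambda>_. 0) g M < \<infinity>"
    using assms(4) integrable_norm_square_iff_L2_sqdist[OF assms(2)] L2_sqdist_commute by metis
  ultimately have "2 * L2_sqdist f (\<lambda>_. 0) M + 2 * L2_sqdist (\<lambda>_. 0) g M < \<infinity>"
    by (simp add: ennreal_mult_less_top)
  then have "L2_sqdist f g M < \<infinity>"
    by (rule order.strict_trans1[OF L2_sqdist_triangle[OF assms(1) borel_measurable_const assms(2)]])
  moreover have "L2_sqdist (\<lambda>x. f x - g x) (\<lambda>_. 0) M = L2_sqdist f g M"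
    by (simp add: L2_sqdist_def)
  ultimately show ?thesis
    using integrable_norm_square_iff_L2_sqdist[of "\<lambda>x. f x - g x"] by simp
qed

lemma integrable_inner_if_square_integrable:
  fixes f k :: "'x \<Rightarrow> 'b::euclidean_space"
  assumes [measurable]: "f \<in> borel_measurable M" "k \<in> borel_measurable M"
    and "integrable M (\<lambda>x. (norm (f x))\<^sup>2)" "integrable M (\<lambda>x. (norm (k x))\<^sup>2)"
  shows "integrable M (\<lambda>x. f x \<bullet> k x)"
proof (rule Bochner_Integration.integrable_bound)
  show "integrable M (\<lambda>x. (norm (f x))\<^sup>2 + (norm (k x))\<^sup>2)" using assms by auto
  show "AE x in M. norm (f x \<bullet> k x) \<le> norm ((norm (f x))\<^sup>2 + (norm (k x))\<^sup>2)"
  proof (rule AE_I2)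
    fix x
    have "norm (f x \<bullet> k x) \<le> norm (f x) * norm (k x)" by (simp add: Cauchy_Schwarz_ineq2)
    also have "\<dots> \<le> (norm (f x))\<^sup>2 + (norm (k x))\<^sup>2"
      using sum_squares_bound[of "norm (f x)" "norm (k x)"]
        mult_nonneg_nonneg[OF norm_ge_zero norm_ge_zero, of "f x" "k x"] by linarith
    finally show "norm (f x \<bullet> k x) \<le> norm ((norm (f x))\<^sup>2 + (norm (k x))\<^sup>2)" by simp
  qed
qed measurable

lemma ennreal_tendsto_0_if_power2_tendsto_0:
  fixes Y :: "nat \<Rightarrow> ennreal"
  assumes "(\<lambda>n. Y n ^ 2) \<longlonglongrightarrow> 0"
  shows "Y \<longlonglongrightarrow> 0"
proof (rule tendsto_zero_ennreal)
  fix r :: real assume r: "0 < r"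
  have "\<forall>\<^sub>F n in sequentially. Y n ^ 2 < ennreal (r\<^sup>2)"
    using order_tendstoD(2)[OF assms, of "ennreal (r\<^sup>2)"] r by simp
  then show "\<forall>\<^sub>F n in sequentially. Y n < ennreal r"
  proof (rule eventually_mono)
    fix n assume Yn: "Y n ^ 2 < ennreal (r\<^sup>2)"
    show "Y n < ennreal r"
    proof (rule ccontr)
      assume "\<not> Y n < ennreal r"
      then have "ennreal r ^ 2 \<le> Y n ^ 2" by (intro power_mono) auto
      then show False using Yn r by (simp add: ennreal_power)
    qed
  qed
qed

lemma integral_inner_tendsto_if_L2_sqdist_tendsto:
  fixes f :: "nat \<Rightarrow> 'x \<Rightarrow> 'b::euclidean_space"
  assumes [measurable]: "\<And>n. f n \<in> borel_measurable M" "g \<in> borel_measurable M" "k \<in> borel_measurable M"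
    and fL: "\<And>n. integrable M (\<lambda>x. (norm (f n x))\<^sup>2)" and gL: "integrable M (\<lambda>x. (norm (g x))\<^sup>2)"
    and kL: "integrable M (\<lambda>x. (norm (k x))\<^sup>2)" and lim: "(\<lambda>n. L2_sqdist (f n) g M) \<longlonglongrightarrow> 0"
  shows "(\<lambda>n. \<integral>x. f n x \<bullet> k x \<partial>M) \<longlonglongrightarrow> (\<integral>x. g x \<bullet> k x \<partial>M)"
proof (rule tendsto_L1_int)
  show "integrable M (\<lambda>x. f n x \<bullet> k x)" for n
    by (rule integrable_inner_if_square_integrable[OF _ _ fL kL]) measurable
  show "integrable M (\<lambda>x. g x \<bullet> k x)"
    by (rule integrable_inner_if_square_integrable[OF _ _ gL kL]) measurable
  define Y where "Y n = (\<integral>\<^sup>+x. ennreal (norm (f n x - g x)) * ennreal (norm (k x)) \<partial>M)" for n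
  define K where "K = (\<integral>\<^sup>+x. ennreal (norm (k x)) ^ 2 \<partial>M)"
  have "K = ennreal (\<integral>x. (norm (k x))\<^sup>2 \<partial>M)"
    unfolding K_def using kL by (simp add: ennreal_power nn_integral_eq_integral)
  then have KL: "(\<lambda>n. K * L2_sqdist (f n) g M) \<longlonglongrightarrow> 0"
    using ennreal_tendsto_cmult[OF _ lim, of K] by simp
  have Y2: "Y n ^ 2 \<le> K * L2_sqdist (f n) g M" for n
  proof -
    have "Y n ^ 2 \<le> (\<integral>\<^sup>+x. ennreal (norm (f n x - g x)) ^ 2 \<partial>M) * K"
      unfolding Y_def K_def by (rule Cauchy_Schwarz_nn_integral) measurable
    also have "\<dots> = K * L2_sqdist (f n) g M"
      by (simp add: L2_sqdist_def ennreal_power mult.commute)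
    finally show ?thesis .
  qed
  have "(\<lambda>n. Y n ^ 2) \<longlonglongrightarrow> 0"
    by (rule tendsto_sandwich[OF _ _ tendsto_const KL]) (simp_all add: Y2)
  then have Y0: "Y \<longlonglongrightarrow> 0"
    by (rule ennreal_tendsto_0_if_power2_tendsto_0)
  have "(\<integral>\<^sup>+x. norm (f n x \<bullet> k x - g x \<bullet> k x) \<partial>M) \<le> Y n" for n
    unfolding Y_def
  proof (rule nn_integral_mono)
    fix x
    have "norm (f n x \<bullet> k x - g x \<bullet> k x) \<le> norm (f n x - g x) * norm (k x)"
      by (simp add: Cauchy_Schwarz_ineq2 flip: inner_diff_left)
    then show "ennreal (norm (f n x \<bullet> k x - g x \<bullet> k x)) \<le> ennreal (norm (f n x - g x)) * ennreal (norm (k x))"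
      by (simp add: ennreal_mult'[symmetric] ennreal_leI)
  qed
  then show "(\<lambda>n. \<integral>\<^sup>+x. norm (f n x \<bullet> k x - g x \<bullet> k x) \<partial>M) \<longlonglongrightarrow> 0"
    by (intro tendsto_sandwich[OF _ _ tendsto_const Y0]) simp_all
qed

lemma AE_eq_0_outside_if_L2_sqdist_tendsto:
  fixes f :: "nat \<Rightarrow> 'x \<Rightarrow> 'b::euclidean_space"
  assumes [measurable]: "\<And>n. f n \<in> borel_measurable M" "g \<in> borel_measurable M" "\<Omega> \<in> sets M"
    and "\<And>n x. x \<notin> \<Omega> \<Longrightarrow> f n x = 0" "(\<lambda>n. L2_sqdist (f n) g M) \<longlonglongrightarrow> 0"
  shows "AE x in M. x \<notin> \<Omega> \<longrightarrow> g x = 0"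
proof -
  let ?c = "\<integral>\<^sup>+x. ennreal (indicator (- \<Omega>) x * (norm (g x))\<^sup>2) \<partial>M"
  have "?c \<le> L2_sqdist (f n) g M" for n
    unfolding L2_sqdist_def by (rule nn_integral_mono) (auto simp: indicator_def assms(4))
  then have "?c = 0"
    using tendsto_le[OF _ assms(5) tendsto_const] by (simp add: le_zero_eq)
  then have "AE x in M. ennreal (indicator (- \<Omega>) x * (norm (g x))\<^sup>2) = 0"
    by (subst (asm) nn_integral_0_iff_AE) auto
  then show ?thesis
    by eventually_elim (auto simp: indicator_def)
qed

lemma L2_sqdist_tendsto_AE_subseq:
  fixes f :: "nat \<Rightarrow> 'x \<Rightarrow> 'b::euclidean_space"
  assumes [measurable]: "\<And>n. f n \<in> borel_measurable M" "g \<in> borel_measurable M"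
    and int: "\<And>n. integrable M (\<lambda>x. (norm (f n x - g x))\<^sup>2)"
    and lim: "(\<lambda>n. L2_sqdist (f n) g M) \<longlonglongrightarrow> 0"
  obtains r where "strict_mono r" "AE x in M. (\<lambda>n. f (r n) x) \<longlonglongrightarrow> g x"
proof -
  have "L2_sqdist (f n) g M = ennreal (\<integral>x. (norm (f n x - g x))\<^sup>2 \<partial>M)" for n
    unfolding L2_sqdist_def using int by (simp add: nn_integral_eq_integral)
  with lim have "(\<lambda>n. ennreal (\<integral>x. (norm (f n x - g x))\<^sup>2 \<partial>M)) \<longlonglongrightarrow> ennreal 0" by simp
  then have "(\<lambda>n. \<integral>x. norm ((norm (f n x - g x))\<^sup>2) \<partial>M) \<longlonglongrightarrow> 0"
    by (subst (asm) tendsto_ennreal_iff) (auto intro!: always_eventually integral_nonneg)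
  from tendsto_L1_AE_subseq[OF int this]
  obtain r where r: "strict_mono r" and ae: "AE x in M. (\<lambda>n. (norm (f (r n) x - g x))\<^sup>2) \<longlonglongrightarrow> 0"
    by blast
  from ae have "AE x in M. (\<lambda>n. f (r n) x) \<longlonglongrightarrow> g x"
  proof eventually_elim
    case (elim x)
    then have "(\<lambda>n. sqrt ((norm (f (r n) x - g x))\<^sup>2)) \<longlonglongrightarrow> sqrt 0" by (intro tendsto_real_sqrt)
    then have "(\<lambda>n. norm (f (r n) x - g x)) \<longlonglongrightarrow> 0" by simp
    then have "(\<lambda>n. f (r n) x - g x) \<longlonglongrightarrow> 0" by (simp only: tendsto_norm_zero_iff)
    then show ?case by (simp add: LIM_zero_iff)
  qed
  with r show ?thesis by (rule that)
qed

lemma L2_sqdist_tendsto_0_dominated: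
  fixes f :: "nat \<Rightarrow> 'x \<Rightarrow> 'b::euclidean_space" and w :: "'x \<Rightarrow> real"
  assumes [measurable]: "\<And>n. f n \<in> borel_measurable M" "g \<in> borel_measurable M" "w \<in> borel_measurable M"
    and wL: "integrable M (\<lambda>x. (w x)\<^sup>2)"
    and bound: "\<And>n x. norm (f n x - g x) \<le> w x"
    and lim: "AE x in M. (\<lambda>n. f n x) \<longlonglongrightarrow> g x"
  shows "(\<lambda>n. L2_sqdist (f n) g M) \<longlonglongrightarrow> 0"
proof -
  have "(\<lambda>n. \<integral>\<^sup>+x. norm ((\<lambda>x. 0::real) x - (norm (f n x - g x))\<^sup>2) \<partial>M) \<longlonglongrightarrow> 0"
  proof (rule nn_integral_dominated_convergence_norm[where w = "\<lambda>x. (w x)\<^sup>2"])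
    show "(\<integral>\<^sup>+x. ennreal ((w x)\<^sup>2) \<partial>M) < \<infinity>"
      using wL by (simp add: nn_integral_eq_integral)
    show "AE x in M. norm ((norm (f n x - g x))\<^sup>2) \<le> (w x)\<^sup>2" for n
      using bound[of n] by (intro AE_I2) (simp add: power_mono)
    show "AE x in M. (\<lambda>n. (norm (f n x - g x))\<^sup>2) \<longlonglongrightarrow> 0"
      using lim
    proof eventually_elim
      case (elim x)
      then have "(\<lambda>n. (norm (f n x - g x))\<^sup>2) \<longlonglongrightarrow> (norm (g x - g x))\<^sup>2"
        by (intro tendsto_intros)
      then show ?case by simp
    qed
  qed measurable
  then show ?thesis
    by (simp add: L2_sqdist_def)
qed

lemma L2_sqdist_compose_le:
  fixes f :: "real \<Rightarrow> real"
  assumes "\<And>s t. \<bar>f s - f t\<bar> \<le> \<bar>s - t\<bar>"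
  shows "L2_sqdist (\<lambda>x. f (a x)) (\<lambda>x. f (b x)) M \<le> L2_sqdist a b M"
  unfolding L2_sqdist_def
  by (intro nn_integral_mono ennreal_leI) (simp add: abs_le_square_iff[symmetric] assms)

lemma L2_sqdist_scaleR_le:
  fixes a b :: "'x \<Rightarrow> 'b::real_normed_vector"
  assumes "\<And>x. \<bar>c x\<bar> \<le> 1"
  shows "L2_sqdist (\<lambda>x. c x *\<^sub>R a x) (\<lambda>x. c x *\<^sub>R b x) M \<le> L2_sqdist a b M"
  unfolding L2_sqdist_def
proof (intro nn_integral_mono ennreal_leI power_mono)
  fix x
  have "norm (c x *\<^sub>R a x - c x *\<^sub>R b x) = \<bar>c x\<bar> * norm (a x - b x)"
    by (simp flip: scaleR_diff_right)
  also have "\<dots> \<le> norm (a x - b x)"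
    using mult_right_mono[OF assms[of x] norm_ge_zero] by simp
  finally show "norm (c x *\<^sub>R a x - c x *\<^sub>R b x) \<le> norm (a x - b x)" .
qed simp

lemma L2_sqdist_scaleR_tendsto_0:
  fixes G :: "'x \<Rightarrow> 'b::euclidean_space"
  assumes [measurable]: "\<And>n. c n \<in> borel_measurable M" "c0 \<in> borel_measurable M" "G \<in> borel_measurable M"
    and GL: "integrable M (\<lambda>x. (norm (G x))\<^sup>2)"
    and bound: "\<And>n x. \<bar>c n x - c0 x\<bar> \<le> K" and lim: "AE x in M. (\<lambda>n. c n x) \<longlonglongrightarrow> c0 x"
  shows "(\<lambda>n. L2_sqdist (\<lambda>x. c n x *\<^sub>R G x) (\<lambda>x. c0 x *\<^sub>R G x) M) \<longlonglongrightarrow> 0"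
proof (rule L2_sqdist_tendsto_0_dominated[where w = "\<lambda>x. K * norm (G x)"])
  show "integrable M (\<lambda>x. (K * norm (G x))\<^sup>2)"
    using GL by (simp add: power_mult_distrib)
  show "norm (c n x *\<^sub>R G x - c0 x *\<^sub>R G x) \<le> K * norm (G x)" for n x
    using mult_right_mono[OF bound norm_ge_zero[of "G x"]] by (simp flip: scaleR_diff_left)
  show "AE x in M. (\<lambda>n. c n x *\<^sub>R G x) \<longlonglongrightarrow> c0 x *\<^sub>R G x"
    using lim by eventually_elim (intro tendsto_scaleR tendsto_const)
qed measurable

section \<open>Compactly supported \<open>C\<^sup>1\<close> test functions\<close>

lemma integrable_continuous_vanishing_outside_compact:
  fixes f :: "'a::euclidean_space \<Rightarrow> 'b::{banach, second_countable_topology}"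
  assumes "continuous_on UNIV f" "compact K" "\<And>x. x \<notin> K \<Longrightarrow> f x = 0"
  shows "integrable lebesgue f"
proof -
  have "integrable lborel (\<lambda>x. indicator K x *\<^sub>R f x)"
    by (rule borel_integrable_compact[OF assms(2)]) (use assms(1) continuous_on_subset in blast)
  moreover have "(\<lambda>x. indicator K x *\<^sub>R f x) = f"
    using assms(3) by (auto simp: indicator_def)
  ultimately have "integrable lborel f" by simp
  moreover have "f \<in> borel_measurable lborel"
    using assms(1) by (simp add: borel_measurable_continuous_onI)
  ultimately show ?thesis
    by (simp add: integrable_completion)
qed

lemma C1c_continuous:
  assumes "C1c \<Omega> \<phi> D\<phi>"
  shows "continuous_on UNIV \<phi>"
proof -
  have "(\<phi> has_derivative (\<lambda>h. D\<phi> x \<bullet> h)) (at x)" for x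
    using assms by (simp add: C1c_def)
  then show ?thesis
    by (meson continuous_at_imp_continuous_on has_derivative_continuous)
qed

lemma C1c_eq_0_outside_support:
  assumes "C1c \<Omega> \<phi> D\<phi>" "x \<notin> closure {x. \<phi> x \<noteq> 0}"
  shows "\<phi> x = 0" "D\<phi> x = 0"
proof -
  let ?S = "- closure {x. \<phi> x \<noteq> 0}"
  have zero: "\<phi> y = 0" if "y \<in> ?S" for y
    using that closure_subset[of "{x. \<phi> x \<noteq> 0}"] by blast
  show "\<phi> x = 0" using assms(2) by (intro zero) simp
  have "((\<lambda>_. 0::real) has_derivative (\<lambda>_. 0)) (at x)" by simp
  then have "(\<phi> has_derivative (\<lambda>_. 0)) (at x)"
  proof (rule has_derivative_transform_within_open[of _ _ _ _ ?S])
    show "open ?S" by (rule open_Compl) (rule closed_closure)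
    show "x \<in> ?S" using assms(2) by simp
    show "0 = \<phi> y" if "y \<in> ?S" for y using zero[OF that] by simp
  qed
  moreover have "(\<phi> has_derivative (\<lambda>h. D\<phi> x \<bullet> h)) (at x)"
    using assms(1) by (simp add: C1c_def)
  ultimately have "(\<lambda>h. D\<phi> x \<bullet> h) = (\<lambda>_. 0)"
    by (rule has_derivative_unique[rotated])
  then have "D\<phi> x \<bullet> D\<phi> x = 0" by metis
  then show "D\<phi> x = 0" by simp
qed

lemma C1c_eq_0_outside:
  assumes "C1c \<Omega> \<phi> D\<phi>" "x \<notin> \<Omega>"
  shows "\<phi> x = 0" "D\<phi> x = 0"
proof -
  have "closure {x. \<phi> x \<noteq> 0} \<subseteq> \<Omega>" using assms(1) by (simp add: C1c_def)
  then have "x \<notin> closure {x. \<phi> x \<noteq> 0}" using assms(2) by blast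
  then show "\<phi> x = 0" "D\<phi> x = 0"
    using C1c_eq_0_outside_support[OF assms(1)] by blast+
qed

lemma C1c_measurable:
  assumes "C1c \<Omega> \<phi> D\<phi>"
  shows "\<phi> \<in> borel_measurable lebesgue" "D\<phi> \<in> borel_measurable lebesgue"
proof -
  have "\<phi> \<in> borel_measurable borel" "D\<phi> \<in> borel_measurable borel"
    using assms C1c_continuous[OF assms] by (auto simp: C1c_def intro: borel_measurable_continuous_onI)
  then show "\<phi> \<in> borel_measurable lebesgue" "D\<phi> \<in> borel_measurable lebesgue"
    by (simp_all add: measurable_completion)
qed

lemma C1c_square_integrable:
  assumes "C1c \<Omega> \<phi> D\<phi>"
  shows "integrable lebesgue (\<lambda>x. (norm (\<phi> x))\<^sup>2)" "integrable lebesgue (\<lambda>x. (norm (D\<phi> x))\<^sup>2)"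
proof -
  let ?K = "closure {x. \<phi> x \<noteq> 0}"
  have K: "compact ?K" and cD: "continuous_on UNIV D\<phi>"
    using assms by (simp_all add: C1c_def)
  note c = C1c_continuous[OF assms]
  note zero = C1c_eq_0_outside_support[OF assms]
  show "integrable lebesgue (\<lambda>x. (norm (\<phi> x))\<^sup>2)"
  proof (rule integrable_continuous_vanishing_outside_compact[OF _ K])
    show "continuous_on UNIV (\<lambda>x. (norm (\<phi> x))\<^sup>2)" using c by (intro continuous_intros)
    show "(norm (\<phi> x))\<^sup>2 = 0" if "x \<notin> ?K" for x using zero(1)[OF that] by simp
  qed
  show "integrable lebesgue (\<lambda>x. (norm (D\<phi> x))\<^sup>2)"
  proof (rule integrable_continuous_vanishing_outside_compact[OF _ K])
    show "continuous_on UNIV (\<lambda>x. (norm (D\<phi> x))\<^sup>2)" using cD by (intro continuous_intros)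
    show "(norm (D\<phi> x))\<^sup>2 = 0" if "x \<notin> ?K" for x using zero(2)[OF that] by simp
  qed
qed

lemma C1c_uminus:
  assumes "C1c \<Omega> \<phi> D\<phi>"
  shows "C1c \<Omega> (\<lambda>x. - \<phi> x) (\<lambda>x. - D\<phi> x)"
proof -
  have "((\<lambda>x. - \<phi> x) has_derivative (\<lambda>h. - D\<phi> x \<bullet> h)) (at x)" for x
    using has_derivative_minus[of \<phi> "\<lambda>h. D\<phi> x \<bullet> h"] assms by (simp add: C1c_def)
  moreover have "continuous_on UNIV (\<lambda>x. - D\<phi> x)"
    using assms by (auto simp: C1c_def intro!: continuous_intros)
  ultimately show ?thesis using assms by (simp add: C1c_def)
qed

lemma C1c_compose:
  fixes f f' :: "real \<Rightarrow> real"
  assumes C: "C1c \<Omega> \<phi> D\<phi>" and f0: "f 0 = 0" and d: "\<And>t. (f has_real_derivative f' t) (at t)"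
    and c: "continuous_on UNIV f'"
  shows "C1c \<Omega> (\<lambda>x. f (\<phi> x)) (\<lambda>x. f' (\<phi> x) *\<^sub>R D\<phi> x)"
proof -
  have der: "((\<lambda>x. f (\<phi> x)) has_derivative (\<lambda>h. (f' (\<phi> x) *\<^sub>R D\<phi> x) \<bullet> h)) (at x)" for x
  proof -
    have "(\<phi> has_derivative (\<lambda>h. D\<phi> x \<bullet> h)) (at x)" using C by (simp add: C1c_def)
    from has_derivative_compose[OF this d[of "\<phi> x", unfolded has_field_derivative_def]]
    show ?thesis by (simp add: o_def)
  qed
  have "continuous_on UNIV (\<lambda>x. f' (\<phi> x))"
    by (rule continuous_on_compose2[OF c C1c_continuous[OF C]]) auto
  then have cont: "continuous_on UNIV (\<lambda>x. f' (\<phi> x) *\<^sub>R D\<phi> x)"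
    using C by (auto simp: C1c_def intro!: continuous_intros)
  have sub: "closure {x. f (\<phi> x) \<noteq> 0} \<subseteq> closure {x. \<phi> x \<noteq> 0}"
    using f0 by (intro closure_mono) auto
  have "compact (closure {x. \<phi> x \<noteq> 0} \<inter> closure {x. f (\<phi> x) \<noteq> 0})"
    using C by (intro compact_Int_closed) (auto simp: C1c_def)
  then have "compact (closure {x. f (\<phi> x) \<noteq> 0})"
    using sub by (simp add: Int_absorb1)
  with der cont sub C show ?thesis
    unfolding C1c_def by blast
qed

section \<open>The space \<open>H\<^sup>1\<^sub>0\<close>\<close>

lemma H10_iff_L2_sqdist:
  "H10 \<Omega> u G \<longleftrightarrow>
     u \<in> borel_measurable lebesgue \<and> G \<in> borel_measurable lebesgue \<and>
     (\<exists>\<phi> D\<phi>. (\<forall>n. C1c \<Omega> (\<phi> n) (D\<phi> n)) \<and>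
        (\<lambda>n. L2_sqdist (\<phi> n) u lebesgue) \<longlonglongrightarrow> 0 \<and> (\<lambda>n. L2_sqdist (D\<phi> n) G lebesgue) \<longlonglongrightarrow> 0)"
  unfolding H10_def L2_sqdist_def by (simp add: real_norm_def power2_abs)

lemma H10E:
  assumes "H10 \<Omega> u G"
  obtains \<phi> D\<phi> where "\<And>n. C1c \<Omega> (\<phi> n) (D\<phi> n)"
    "(\<lambda>n. L2_sqdist (\<phi> n) u lebesgue) \<longlonglongrightarrow> 0" "(\<lambda>n. L2_sqdist (D\<phi> n) G lebesgue) \<longlonglongrightarrow> 0"
proof -
  from assms obtain \<phi> D\<phi> where "\<forall>n. C1c \<Omega> (\<phi> n) (D\<phi> n)"
    "(\<lambda>n. L2_sqdist (\<phi> n) u lebesgue) \<longlonglongrightarrow> 0" "(\<lambda>n. L2_sqdist (D\<phi> n) G lebesgue) \<longlonglongrightarrow> 0"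
    unfolding H10_iff_L2_sqdist by blast
  then show thesis by (intro that) auto
qed

lemma H10_measurable:
  assumes "H10 \<Omega> u G"
  shows "u \<in> borel_measurable lebesgue" "G \<in> borel_measurable lebesgue"
  using assms by (auto simp: H10_def)

lemma H10_square_integrable:
  assumes H: "H10 \<Omega> u G"
  shows "integrable lebesgue (\<lambda>x. (u x)\<^sup>2)" "integrable lebesgue (\<lambda>x. (norm (G x))\<^sup>2)"
proof -
  obtain \<phi> D\<phi> where C: "\<And>n. C1c \<Omega> (\<phi> n) (D\<phi> n)"
    and l1: "(\<lambda>n. L2_sqdist (\<phi> n) u lebesgue) \<longlonglongrightarrow> 0" and l2: "(\<lambda>n. L2_sqdist (D\<phi> n) G lebesgue) \<longlonglongrightarrow> 0"
    using H10E[OF H] by blast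
  note [measurable] = H10_measurable[OF H] C1c_measurable[OF C]
  obtain n where "L2_sqdist (\<phi> n) u lebesgue < 1"
    using order_tendstoD(2)[OF l1, of 1] by (auto simp: eventually_sequentially)
  then have "L2_sqdist u (\<phi> n) lebesgue < \<infinity>"
    by (simp add: L2_sqdist_commute order.strict_trans)
  from integrable_norm_square_if_L2_sqdist_finite[OF _ _ this C1c_square_integrable(1)[OF C]]
  show "integrable lebesgue (\<lambda>x. (u x)\<^sup>2)" by simp
  obtain m where "L2_sqdist (D\<phi> m) G lebesgue < 1"
    using order_tendstoD(2)[OF l2, of 1] by (auto simp: eventually_sequentially)
  then have "L2_sqdist G (D\<phi> m) lebesgue < \<infinity>"
    by (simp add: L2_sqdist_commute order.strict_trans)
  from integrable_norm_square_if_L2_sqdist_finite[OF _ _ this C1c_square_integrable(2)[OF C]]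
  show "integrable lebesgue (\<lambda>x. (norm (G x))\<^sup>2)" by simp
qed

lemma H10_AE_eq_0_outside:
  assumes H: "H10 \<Omega> u G" and [measurable]: "\<Omega> \<in> sets lebesgue"
  shows "AE x in lebesgue. x \<notin> \<Omega> \<longrightarrow> u x = 0" "AE x in lebesgue. x \<notin> \<Omega> \<longrightarrow> G x = 0"
proof -
  obtain \<phi> D\<phi> where C: "\<And>n. C1c \<Omega> (\<phi> n) (D\<phi> n)"
    and l1: "(\<lambda>n. L2_sqdist (\<phi> n) u lebesgue) \<longlonglongrightarrow> 0" and l2: "(\<lambda>n. L2_sqdist (D\<phi> n) G lebesgue) \<longlonglongrightarrow> 0"
    using H10E[OF H] by blast
  note [measurable] = H10_measurable[OF H] C1c_measurable[OF C]
  show "AE x in lebesgue. x \<notin> \<Omega> \<longrightarrow> u x = 0"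
    by (rule AE_eq_0_outside_if_L2_sqdist_tendsto[OF _ _ _ _ l1]) (use C1c_eq_0_outside[OF C] in auto)
  show "AE x in lebesgue. x \<notin> \<Omega> \<longrightarrow> G x = 0"
    by (rule AE_eq_0_outside_if_L2_sqdist_tendsto[OF _ _ _ _ l2]) (use C1c_eq_0_outside[OF C] in auto)
qed

lemma H10_AE_approx:
  assumes H: "H10 \<Omega> u G"
  obtains \<phi> D\<phi> where "\<And>n. C1c \<Omega> (\<phi> n) (D\<phi> n)"
    "(\<lambda>n. L2_sqdist (\<phi> n) u lebesgue) \<longlonglongrightarrow> 0" "(\<lambda>n. L2_sqdist (D\<phi> n) G lebesgue) \<longlonglongrightarrow> 0"
    "AE x in lebesgue. (\<lambda>n. \<phi> n x) \<longlonglongrightarrow> u x"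
proof -
  obtain \<phi> D\<phi> where C: "\<And>n. C1c \<Omega> (\<phi> n) (D\<phi> n)"
    and l1: "(\<lambda>n. L2_sqdist (\<phi> n) u lebesgue) \<longlonglongrightarrow> 0" and l2: "(\<lambda>n. L2_sqdist (D\<phi> n) G lebesgue) \<longlonglongrightarrow> 0"
    using H10E[OF H] by blast
  note [measurable] = H10_measurable[OF H] C1c_measurable[OF C]
  have "integrable lebesgue (\<lambda>x. (norm (u x))\<^sup>2)"
    using H10_square_integrable(1)[OF H] by simp
  then have "integrable lebesgue (\<lambda>x. (norm (\<phi> n x - u x))\<^sup>2)" for n
    by (rule integrable_norm_square_diff[OF C1c_measurable(1)[OF C] H10_measurable(1)[OF H]
          C1c_square_integrable(1)[OF C]])
  then obtain r where r: "strict_mono r" and ae: "AE x in lebesgue. (\<lambda>n. \<phi> (r n) x) \<longlonglongrightarrow> u x"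
    using L2_sqdist_tendsto_AE_subseq[OF C1c_measurable(1)[OF C] H10_measurable(1)[OF H] _ l1] by blast
  show thesis
  proof (rule that[of "\<lambda>n. \<phi> (r n)" "\<lambda>n. D\<phi> (r n)"])
    show "(\<lambda>n. L2_sqdist (\<phi> (r n)) u lebesgue) \<longlonglongrightarrow> 0"
      using LIMSEQ_subseq_LIMSEQ[OF l1 r] by (simp add: o_def)
    show "(\<lambda>n. L2_sqdist (D\<phi> (r n)) G lebesgue) \<longlonglongrightarrow> 0"
      using LIMSEQ_subseq_LIMSEQ[OF l2 r] by (simp add: o_def)
  qed (use C ae in auto)
qed

lemma H10_L2_limit:
  assumes H: "\<And>k. H10 \<Omega> (w k) (W k)"
    and lw: "(\<lambda>k. L2_sqdist (w k) w0 lebesgue) \<longlonglongrightarrow> 0" and lW: "(\<lambda>k. L2_sqdist (W k) W0 lebesgue) \<longlonglongrightarrow> 0"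
    and [measurable]: "w0 \<in> borel_measurable lebesgue" "W0 \<in> borel_measurable lebesgue"
  shows "H10 \<Omega> w0 W0"
proof -
  have [measurable]: "w k \<in> borel_measurable lebesgue" "W k \<in> borel_measurable lebesgue" for k
    using H10_measurable[OF H] by auto
  have "\<forall>k. \<exists>\<phi> D\<phi>. (\<forall>n. C1c \<Omega> (\<phi> n) (D\<phi> n)) \<and>
      (\<lambda>n. L2_sqdist (\<phi> n) (w k) lebesgue) \<longlonglongrightarrow> 0 \<and> (\<lambda>n. L2_sqdist (D\<phi> n) (W k) lebesgue) \<longlonglongrightarrow> 0"
    using H unfolding H10_iff_L2_sqdist by blast
  then obtain \<Phi> D\<Phi> where C: "\<And>k n. C1c \<Omega> (\<Phi> k n) (D\<Phi> k n)"
    and l1: "\<And>k. (\<lambda>n. L2_sqdist (\<Phi> k n) (w k) lebesgue) \<longlonglongrightarrow> 0"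
    and l2: "\<And>k. (\<lambda>n. L2_sqdist (D\<Phi> k n) (W k) lebesgue) \<longlonglongrightarrow> 0"
    by metis
  define e where "e k = ennreal (inverse (real (Suc k)))" for k
  have e0: "e \<longlonglongrightarrow> 0"
    using tendsto_ennrealI[OF LIMSEQ_inverse_real_of_nat] by (simp add: e_def[abs_def])
  have "\<exists>n. L2_sqdist (\<Phi> k n) (w k) lebesgue < e k \<and> L2_sqdist (D\<Phi> k n) (W k) lebesgue < e k" for k
  proof -
    have "e k > 0" by (simp add: e_def)
    from eventually_conj[OF order_tendstoD(2)[OF l1[of k] this] order_tendstoD(2)[OF l2[of k] this]]
    show ?thesis by (auto simp: eventually_sequentially)
  qed
  then obtain N where N: "\<And>k. L2_sqdist (\<Phi> k (N k)) (w k) lebesgue < e k"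
    "\<And>k. L2_sqdist (D\<Phi> k (N k)) (W k) lebesgue < e k"
    by metis
  have [measurable]: "\<Phi> k n \<in> borel_measurable lebesgue" "D\<Phi> k n \<in> borel_measurable lebesgue" for k n
    using C1c_measurable[OF C] by auto
  have a1: "(\<lambda>k. L2_sqdist (\<Phi> k (N k)) (w k) lebesgue) \<longlonglongrightarrow> 0"
    by (rule tendsto_sandwich[OF _ _ tendsto_const e0]) (simp_all add: N(1) less_imp_le)
  have a2: "(\<lambda>k. L2_sqdist (D\<Phi> k (N k)) (W k) lebesgue) \<longlonglongrightarrow> 0"
    by (rule tendsto_sandwich[OF _ _ tendsto_const e0]) (simp_all add: N(2) less_imp_le)
  have "(\<lambda>k. L2_sqdist (\<Phi> k (N k)) w0 lebesgue) \<longlonglongrightarrow> 0"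
    by (rule L2_sqdist_tendsto_0_trans[OF _ _ _ a1 lw]) measurable
  moreover have "(\<lambda>k. L2_sqdist (D\<Phi> k (N k)) W0 lebesgue) \<longlonglongrightarrow> 0"
    by (rule L2_sqdist_tendsto_0_trans[OF _ _ _ a2 lW]) measurable
  ultimately show ?thesis
    unfolding H10_iff_L2_sqdist using C
    by (intro conjI exI[of _ "\<lambda>k. \<Phi> k (N k)"] exI[of _ "\<lambda>k. D\<Phi> k (N k)"]) auto
qed

lemma H10_uminus:
  assumes "H10 \<Omega> u G"
  shows "H10 \<Omega> (\<lambda>x. - u x) (\<lambda>x. - G x)"
proof -
  obtain \<phi> D\<phi> where C: "\<And>n. C1c \<Omega> (\<phi> n) (D\<phi> n)"
    and "(\<lambda>n. L2_sqdist (\<phi> n) u lebesgue) \<longlonglongrightarrow> 0" "(\<lambda>n. L2_sqdist (D\<phi> n) G lebesgue) \<longlonglongrightarrow> 0"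
    using H10E[OF assms] by blast
  moreover have "L2_sqdist (\<lambda>x. - \<phi> n x) (\<lambda>x. - u x) M = L2_sqdist (\<phi> n) u M"
    and "L2_sqdist (\<lambda>x. - D\<phi> n x) (\<lambda>x. - G x) M = L2_sqdist (D\<phi> n) G M" for n M
    unfolding L2_sqdist_def by (metis minus_diff_minus norm_minus_cancel)+
  ultimately show ?thesis
    unfolding H10_iff_L2_sqdist using C1c_uminus[OF C] H10_measurable[OF assms]
    by (intro conjI exI[of _ "\<lambda>n x. - \<phi> n x"] exI[of _ "\<lambda>n x. - D\<phi> n x"]) auto
qed

lemma H10_cong_AE:
  assumes "H10 \<Omega> u G" "v \<in> borel_measurable lebesgue" "W \<in> borel_measurable lebesgue"
    "AE x in lebesgue. u x = v x" "AE x in lebesgue. G x = W x"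
  shows "H10 \<Omega> v W"
proof -
  obtain \<phi> D\<phi> where "\<And>n. C1c \<Omega> (\<phi> n) (D\<phi> n)"
    "(\<lambda>n. L2_sqdist (\<phi> n) u lebesgue) \<longlonglongrightarrow> 0" "(\<lambda>n. L2_sqdist (D\<phi> n) G lebesgue) \<longlonglongrightarrow> 0"
    using H10E[OF assms(1)] by blast
  moreover have "L2_sqdist (\<phi> n) u lebesgue = L2_sqdist (\<phi> n) v lebesgue" for n
    unfolding L2_sqdist_def by (rule nn_integral_cong_AE) (use assms(4) in auto)
  moreover have "L2_sqdist (D\<phi> n) G lebesgue = L2_sqdist (D\<phi> n) W lebesgue" for n
    unfolding L2_sqdist_def by (rule nn_integral_cong_AE) (use assms(5) in auto)
  ultimately show ?thesis
    unfolding H10_iff_L2_sqdist using assms(2,3) by auto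
qed

lemma H10_compose:
  fixes f f' :: "real \<Rightarrow> real"
  assumes H: "H10 \<Omega> u G" and f0: "f 0 = 0" and d: "\<And>t. (f has_real_derivative f' t) (at t)"
    and c: "continuous_on UNIV f'" and b: "\<And>t. \<bar>f' t\<bar> \<le> 1"
  shows "H10 \<Omega> (\<lambda>x. f (u x)) (\<lambda>x. f' (u x) *\<^sub>R G x)"
proof -
  obtain \<phi> D\<phi> where C: "\<And>n. C1c \<Omega> (\<phi> n) (D\<phi> n)"
    and l1: "(\<lambda>n. L2_sqdist (\<phi> n) u lebesgue) \<longlonglongrightarrow> 0" and l2: "(\<lambda>n. L2_sqdist (D\<phi> n) G lebesgue) \<longlonglongrightarrow> 0"
    and ae: "AE x in lebesgue. (\<lambda>n. \<phi> n x) \<longlonglongrightarrow> u x"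
    using H10_AE_approx[OF H] by blast
  note [measurable] = H10_measurable[OF H] C1c_measurable[OF C]
  have "continuous_on UNIV f"
    using d by (meson DERIV_isCont continuous_at_imp_continuous_on)
  then have [measurable]: "f \<in> borel_measurable borel" "f' \<in> borel_measurable borel"
    using c by (auto intro: borel_measurable_continuous_onI)
  have lip: "\<bar>f s - f t\<bar> \<le> \<bar>s - t\<bar>" for s t
    using field_differentiable_bound[of UNIV f f' 1 s t] d b by (simp add: has_field_derivative_at_within)
  have fun_lim: "(\<lambda>n. L2_sqdist (\<lambda>x. f (\<phi> n x)) (\<lambda>x. f (u x)) lebesgue) \<longlonglongrightarrow> 0"
    by (rule tendsto_sandwich[OF _ _ tendsto_const l1]) (simp_all add: L2_sqdist_compose_le lip)
  have A: "(\<lambda>n. L2_sqdist (\<lambda>x. f' (\<phi> n x) *\<^sub>R D\<phi> n x) (\<lambda>x. f' (\<phi> n x) *\<^sub>R G x) lebesgue) \<longlonglongrightarrow> 0"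
    by (rule tendsto_sandwich[OF _ _ tendsto_const l2]) (simp_all add: L2_sqdist_scaleR_le b)
  have conv: "AE x in lebesgue. (\<lambda>n. f' (\<phi> n x)) \<longlonglongrightarrow> f' (u x)"
    using ae
  proof eventually_elim
    case (elim x)
    have "isCont f' (u x)"
      using c by (simp add: continuous_on_eq_continuous_at)
    then show ?case using elim by (rule isCont_tendsto_compose)
  qed
  have B: "(\<lambda>n. L2_sqdist (\<lambda>x. f' (\<phi> n x) *\<^sub>R G x) (\<lambda>x. f' (u x) *\<^sub>R G x) lebesgue) \<longlonglongrightarrow> 0"
  proof (rule L2_sqdist_scaleR_tendsto_0[OF _ _ _ H10_square_integrable(2)[OF H] _ conv])
    show "\<bar>f' (\<phi> n x) - f' (u x)\<bar> \<le> 2" for n x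
      using b[of "\<phi> n x"] b[of "u x"] by linarith
  qed measurable
  have grad_lim: "(\<lambda>n. L2_sqdist (\<lambda>x. f' (\<phi> n x) *\<^sub>R D\<phi> n x) (\<lambda>x. f' (u x) *\<^sub>R G x) lebesgue)
      \<longlonglongrightarrow> 0"
    by (rule L2_sqdist_tendsto_0_trans[OF _ _ _ A B]) measurable
  show ?thesis
    unfolding H10_iff_L2_sqdist using C1c_compose[OF C f0 d c] fun_lim grad_lim
    by (intro conjI exI[of _ "\<lambda>n x. f (\<phi> n x)"] exI[of _ "\<lambda>n x. f' (\<phi> n x) *\<^sub>R D\<phi> n x"]) auto
qed

definition pos_part_approx :: "real \<Rightarrow> real \<Rightarrow> real" where
  "pos_part_approx e t = sqrt ((max t 0)\<^sup>2 + e\<^sup>2) - e"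

definition pos_part_approx_deriv :: "real \<Rightarrow> real \<Rightarrow> real" where
  "pos_part_approx_deriv e t = max t 0 / sqrt ((max t 0)\<^sup>2 + e\<^sup>2)"

lemma has_real_derivative_max_0_power2:
  "((\<lambda>t::real. (max t 0)\<^sup>2) has_real_derivative 2 * max t 0) (at t)"
proof (cases t "0::real" rule: linorder_cases)
  case less
  have "((\<lambda>t::real. 0) has_real_derivative 2 * max t 0) (at t)" using less by simp
  then show ?thesis
    by (rule has_field_derivative_transform_within_open[of _ _ _ "{..<0}"]) (use less in auto)
next
  case greater
  have "((\<lambda>t::real. t\<^sup>2) has_real_derivative 2 * max t 0) (at t)"
    using greater by (auto intro!: derivative_eq_intros)
  then show ?thesis
    by (rule has_field_derivative_transform_within_open[of _ _ _ "{0<..}"]) (use greater in auto)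
next
  case equal
  have "((\<lambda>y. ((max y 0)\<^sup>2 - (max 0 0)\<^sup>2) / (y - 0)) \<longlongrightarrow> 0) (at (0::real))"
  proof (rule Lim_null_comparison[where g = "\<lambda>y. \<bar>y\<bar>"])
    have "norm (((max y 0)\<^sup>2 - (max 0 0)\<^sup>2) / (y - 0)) \<le> \<bar>y\<bar>" for y :: real
      by (cases "y > 0") (auto simp: power2_eq_square abs_mult)
    then show "\<forall>\<^sub>F y in at 0. norm (((max y 0)\<^sup>2 - (max 0 0)\<^sup>2) / (y - 0)) \<le> \<bar>y\<bar>"
      by (intro always_eventually allI)
    show "((\<lambda>y::real. \<bar>y\<bar>) \<longlongrightarrow> 0) (at 0)"
      using tendsto_rabs[OF tendsto_ident_at, of "0::real" UNIV] by simp
  qed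
  then show ?thesis using equal by (simp add: has_field_derivative_iff)
qed

lemma pos_part_approx_has_real_derivative:
  assumes "e > 0"
  shows "(pos_part_approx e has_real_derivative pos_part_approx_deriv e t) (at t)"
proof -
  have pos: "(max t 0)\<^sup>2 + e\<^sup>2 > 0" using assms by (simp add: add_nonneg_pos)
  have "((\<lambda>t. (max t 0)\<^sup>2 + e\<^sup>2) has_real_derivative 2 * max t 0 + 0) (at t)"
    by (rule DERIV_add[OF has_real_derivative_max_0_power2 DERIV_const])
  from DERIV_chain2[OF DERIV_real_sqrt[OF pos] this]
  have "((\<lambda>t. sqrt ((max t 0)\<^sup>2 + e\<^sup>2) - e) has_real_derivative
      (inverse (sqrt ((max t 0)\<^sup>2 + e\<^sup>2)) / 2) * (2 * max t 0 + 0) - 0) (at t)"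
    by (rule DERIV_diff[OF _ DERIV_const])
  moreover have "(inverse (sqrt ((max t 0)\<^sup>2 + e\<^sup>2)) / 2) * (2 * max t 0 + 0) - 0 = pos_part_approx_deriv e t"
    by (simp add: pos_part_approx_deriv_def field_simps)
  ultimately show ?thesis
    unfolding pos_part_approx_def[abs_def] by simp
qed

lemma pos_part_approx_0: "e > 0 \<Longrightarrow> pos_part_approx e 0 = 0"
  by (simp add: pos_part_approx_def)

lemma pos_part_approx_bounds:
  assumes "e > 0"
  shows "0 \<le> pos_part_approx e t" "pos_part_approx e t \<le> max t 0"
proof -
  let ?m = "max t 0"
  have "e \<le> sqrt (?m\<^sup>2 + e\<^sup>2)" by (rule real_le_rsqrt) simp
  then show "0 \<le> pos_part_approx e t" by (simp add: pos_part_approx_def)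
  have "sqrt (?m\<^sup>2 + e\<^sup>2) \<le> sqrt ((?m + e)\<^sup>2)"
    using assms by (intro real_sqrt_le_mono) (simp add: power2_sum)
  then show "pos_part_approx e t \<le> max t 0"
    using assms by (simp add: pos_part_approx_def)
qed

lemma pos_part_approx_deriv_bounds:
  assumes "e > 0"
  shows "0 \<le> pos_part_approx_deriv e t" "pos_part_approx_deriv e t \<le> 1"
proof -
  let ?m = "max t 0"
  have "?m \<le> sqrt (?m\<^sup>2 + e\<^sup>2)" by (rule real_le_rsqrt) simp
  moreover have "sqrt (?m\<^sup>2 + e\<^sup>2) > 0" using assms by (simp add: add_nonneg_pos)
  ultimately show "0 \<le> pos_part_approx_deriv e t" "pos_part_approx_deriv e t \<le> 1"
    by (simp_all add: pos_part_approx_deriv_def)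
qed

lemma continuous_on_pos_part_approx_deriv:
  assumes "e > 0"
  shows "continuous_on UNIV (pos_part_approx_deriv e)"
proof -
  have "\<forall>t\<in>UNIV. sqrt ((max t 0)\<^sup>2 + e\<^sup>2) \<noteq> 0"
    using assms by (simp add: add_nonneg_pos)
  then show ?thesis
    unfolding pos_part_approx_deriv_def[abs_def] by (intro continuous_intros) auto
qed

lemma pos_part_approx_tendsto:
  assumes "e \<longlonglongrightarrow> 0"
  shows "(\<lambda>k. pos_part_approx (e k) t) \<longlonglongrightarrow> max t 0"
proof -
  have "(\<lambda>k. sqrt ((max t 0)\<^sup>2 + (e k)\<^sup>2) - e k) \<longlonglongrightarrow> sqrt ((max t 0)\<^sup>2 + 0\<^sup>2) - 0"
    by (intro tendsto_intros assms)
  then show ?thesis by (simp add: pos_part_approx_def)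
qed

lemma pos_part_approx_deriv_tendsto:
  assumes "e \<longlonglongrightarrow> 0"
  shows "(\<lambda>k. pos_part_approx_deriv (e k) t) \<longlonglongrightarrow> (if t > 0 then 1 else 0)"
proof (cases "t > 0")
  case True
  have "(\<lambda>k. t / sqrt (t\<^sup>2 + (e k)\<^sup>2)) \<longlonglongrightarrow> t / sqrt (t\<^sup>2 + 0\<^sup>2)"
    using True by (intro tendsto_intros assms) simp
  then show ?thesis using True by (simp add: pos_part_approx_deriv_def)
qed (simp add: pos_part_approx_deriv_def)

lemma H10_max_0:
  assumes H: "H10 \<Omega> u G"
  shows "H10 \<Omega> (\<lambda>x. max (u x) 0) (\<lambda>x. if 0 < u x then G x else 0)"
proof -
  define e where "e k = inverse (real (Suc k))" for k
  have e_pos: "e k > 0" for k by (simp add: e_def)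
  have e0: "e \<longlonglongrightarrow> 0" unfolding e_def by (rule LIMSEQ_inverse_real_of_nat)
  note [measurable] = H10_measurable[OF H]
  have [measurable]: "pos_part_approx c \<in> borel_measurable borel"
    "pos_part_approx_deriv c \<in> borel_measurable borel" for c
    unfolding pos_part_approx_def[abs_def] pos_part_approx_deriv_def[abs_def] by measurable
  show ?thesis
  proof (rule H10_L2_limit)
    show "H10 \<Omega> (\<lambda>x. pos_part_approx (e k) (u x)) (\<lambda>x. pos_part_approx_deriv (e k) (u x) *\<^sub>R G x)" for k
      using pos_part_approx_deriv_bounds[OF e_pos, of k]
      by (intro H10_compose[OF H] pos_part_approx_0 pos_part_approx_has_real_derivative
          continuous_on_pos_part_approx_deriv e_pos) (simp add: abs_le_iff)
    show "(\<lambda>k. L2_sqdist (\<lambda>x. pos_part_approx (e k) (u x)) (\<lambda>x. max (u x) 0) lebesgue) \<longlonglongrightarrow> 0"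
    proof (rule L2_sqdist_tendsto_0_dominated[where w = "\<lambda>x. \<bar>u x\<bar>"])
      show "integrable lebesgue (\<lambda>x. \<bar>u x\<bar>\<^sup>2)"
        using H10_square_integrable(1)[OF H] by simp
      show "norm (pos_part_approx (e k) (u x) - max (u x) 0) \<le> \<bar>u x\<bar>" for k x
        using pos_part_approx_bounds[OF e_pos, of k "u x"] by auto
      show "AE x in lebesgue. (\<lambda>k. pos_part_approx (e k) (u x)) \<longlonglongrightarrow> max (u x) 0"
        by (intro AE_I2 pos_part_approx_tendsto e0)
    qed measurable
    let ?c = "\<lambda>x. if 0 < u x then 1 else 0 :: real"
    have "(\<lambda>x. if 0 < u x then G x else 0) = (\<lambda>x. ?c x *\<^sub>R G x)" by auto
    moreover have "(\<lambda>k. L2_sqdist (\<lambda>x. pos_part_approx_deriv (e k) (u x) *\<^sub>R G x)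
        (\<lambda>x. ?c x *\<^sub>R G x) lebesgue) \<longlonglongrightarrow> 0"
    proof (rule L2_sqdist_scaleR_tendsto_0[OF _ _ _ H10_square_integrable(2)[OF H]])
      show "\<bar>pos_part_approx_deriv (e k) (u x) - ?c x\<bar> \<le> 1" for k x
        using pos_part_approx_deriv_bounds[OF e_pos, of k "u x"] by auto
      show "AE x in lebesgue. (\<lambda>k. pos_part_approx_deriv (e k) (u x)) \<longlonglongrightarrow> ?c x"
        by (intro AE_I2 pos_part_approx_deriv_tendsto e0)
    qed measurable
    ultimately show "(\<lambda>k. L2_sqdist (\<lambda>x. pos_part_approx_deriv (e k) (u x) *\<^sub>R G x)
        (\<lambda>x. if 0 < u x then G x else 0) lebesgue) \<longlonglongrightarrow> 0"
      by simp
  qed measurable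
qed

lemma H10_positive_part:
  assumes H: "H10 \<Omega> u G" and [measurable]: "\<Omega> \<in> sets lebesgue"
  shows "H10 \<Omega> (\<lambda>x. if x \<in> \<Omega> \<and> 0 < u x then u x else 0) (\<lambda>x. if x \<in> \<Omega> \<and> 0 < u x then G x else 0)"
proof -
  note [measurable] = H10_measurable[OF H]
  show ?thesis
  proof (rule H10_cong_AE[OF H10_max_0[OF H]])
    show "AE x in lebesgue. max (u x) 0 = (if x \<in> \<Omega> \<and> 0 < u x then u x else 0)"
      using H10_AE_eq_0_outside(1)[OF H assms(2)] by eventually_elim auto
    show "AE x in lebesgue. (if 0 < u x then G x else 0) = (if x \<in> \<Omega> \<and> 0 < u x then G x else 0)"
      using H10_AE_eq_0_outside(2)[OF H assms(2)] by eventually_elim auto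
  qed measurable
qed

section \<open>Integration by parts and uniqueness of the weak gradient\<close>

definition C1_with_deriv :: "('a::euclidean_space \<Rightarrow> real) \<Rightarrow> ('a \<Rightarrow> 'a \<Rightarrow> real) \<Rightarrow> bool" where
  "C1_with_deriv \<psi> \<psi>' \<longleftrightarrow>
     (\<forall>x. (\<psi> has_derivative \<psi>' x) (at x)) \<and> (\<forall>h. continuous_on UNIV (\<lambda>x. \<psi>' x h))"

lemma C1_with_deriv_continuous: "C1_with_deriv \<psi> \<psi>' \<Longrightarrow> continuous_on UNIV \<psi>"
  unfolding C1_with_deriv_def by (meson continuous_at_imp_continuous_on has_derivative_continuous)

lemma C1_with_deriv_scaleR: "C1_with_deriv \<psi> \<psi>' \<Longrightarrow> \<psi>' x (c *\<^sub>R h) = c * \<psi>' x h"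
  unfolding C1_with_deriv_def
  by (metis has_derivative_bounded_linear bounded_linear.linear linear_scale real_scaleR_def)

lemma real_polynomial_function_C1_with_deriv:
  fixes \<psi> :: "'a::euclidean_space \<Rightarrow> real"
  assumes "real_polynomial_function \<psi>"
  shows "\<exists>\<psi>'. C1_with_deriv \<psi> \<psi>'"
  using assms
proof (induction \<psi> rule: real_polynomial_function.induct)
  case (linear f)
  then have "C1_with_deriv f (\<lambda>x. f)"
    unfolding C1_with_deriv_def by (auto intro: bounded_linear_imp_has_derivative)
  then show ?case by blast
next
  case (const c)
  have "C1_with_deriv (\<lambda>x. c) (\<lambda>x h. 0)" unfolding C1_with_deriv_def by auto
  then show ?case by blast
next
  case (add f g)
  then obtain f' g' where "C1_with_deriv f f'" "C1_with_deriv g g'" by blast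
  then have "C1_with_deriv (\<lambda>x. f x + g x) (\<lambda>x h. f' x h + g' x h)"
    unfolding C1_with_deriv_def by (auto intro!: has_derivative_add continuous_intros)
  then show ?case by blast
next
  case (mult f g)
  then obtain f' g' where f: "C1_with_deriv f f'" and g: "C1_with_deriv g g'" by blast
  have "continuous_on UNIV f" "continuous_on UNIV g"
    using f g by (auto intro: C1_with_deriv_continuous)
  with f g have "C1_with_deriv (\<lambda>x. f x * g x) (\<lambda>x h. f x * g' x h + f' x h * g x)"
    unfolding C1_with_deriv_def by (auto intro!: has_derivative_mult continuous_intros)
  then show ?case by blast
qed

lemma lborel_integral_translate:
  fixes F :: "'a::euclidean_space \<Rightarrow> 'b::{banach, second_countable_topology}"
  assumes "integrable lborel F"
  shows "integrable lborel (\<lambda>x. F (c + x))" "(\<integral>x. F (c + x) \<partial>lborel) = (\<integral>x. F x \<partial>lborel)"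
proof -
  have m: "(+) c \<in> measurable lborel borel" by simp
  have f: "F \<in> borel_measurable borel" using assms by simp
  show "integrable lborel (\<lambda>x. F (c + x))"
    using integrable_distr_eq[OF m f] assms by (simp add: lborel_distr_plus)
  show "(\<integral>x. F (c + x) \<partial>lborel) = (\<integral>x. F x \<partial>lborel)"
    using integral_distr[OF m f] by (simp add: lborel_distr_plus)
qed

lemma difference_quotient_bound:
  fixes F dF :: "'a::real_normed_vector \<Rightarrow> real"
  assumes "\<And>s. ((\<lambda>s. F (x + s *\<^sub>R b)) has_real_derivative dF (x + s *\<^sub>R b)) (at s)"
    and "\<And>y. \<bar>dF y\<bar> \<le> C" and "t > 0"
  shows "\<bar>(F (x + t *\<^sub>R b) - F x) / t\<bar> \<le> C"
proof -
  obtain z where "F (x + t *\<^sub>R b) - F (x + 0 *\<^sub>R b) = (t - 0) * dF (x + z *\<^sub>R b)"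
    using MVT2[OF \<open>t > 0\<close> assms(1)] by blast
  then show ?thesis using assms(2)[of "x + z *\<^sub>R b"] \<open>t > 0\<close> by simp
qed

lemma shift_notin_bounded:
  fixes x b :: "'a::real_normed_vector"
  assumes "\<And>y. y \<in> K \<Longrightarrow> norm y \<le> R" "norm x > R + norm b" "0 \<le> t" "t \<le> 1"
  shows "x \<notin> K" "x + t *\<^sub>R b \<notin> K"
proof -
  have "norm x - t * norm b \<le> norm (x + t *\<^sub>R b)"
    using norm_triangle_ineq2[of x "- (t *\<^sub>R b)"] assms(3) by simp
  moreover have "t * norm b \<le> norm b"
    using assms(3,4) by (simp add: mult_left_le_one_le)
  ultimately have "norm (x + t *\<^sub>R b) > R" "norm x > R"
    using assms(2) norm_ge_zero[of b] by linarith+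
  then show "x \<notin> K" "x + t *\<^sub>R b \<notin> K"
    using assms(1) by force+
qed

lemma integral_difference_quotient_tendsto:
  fixes F dF :: "'a::euclidean_space \<Rightarrow> real"
  assumes K: "compact K" and FK: "\<And>x. x \<notin> K \<Longrightarrow> F x = 0" and dFK: "\<And>x. x \<notin> K \<Longrightarrow> dF x = 0"
    and cF: "continuous_on UNIV F" and cdF: "continuous_on UNIV dF"
    and der: "\<And>x s. ((\<lambda>s. F (x + s *\<^sub>R b)) has_real_derivative dF (x + s *\<^sub>R b)) (at s)"
    and t0: "t \<longlonglongrightarrow> 0" and t_pos: "\<And>n. 0 < t n" and t_le_1: "\<And>n. t n \<le> 1"
  shows "(\<lambda>n. \<integral>x. (F (x + t n *\<^sub>R b) - F x) / t n \<partial>lborel) \<longlonglongrightarrow> (\<integral>x. dF x \<partial>lborel)"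
proof -
  have [measurable]: "F \<in> borel_measurable borel" "dF \<in> borel_measurable borel"
    using cF cdF by (auto intro: borel_measurable_continuous_onI)
  obtain R where Rb: "\<And>x. x \<in> K \<Longrightarrow> norm x \<le> R"
    using compact_imp_bounded[OF K] unfolding bounded_iff by auto
  have "bounded (dF ` K)"
    using K cdF by (intro compact_imp_bounded compact_continuous_image) (auto intro: continuous_on_subset)
  then obtain C where C0: "C > 0" and CK: "\<And>y. y \<in> K \<Longrightarrow> \<bar>dF y\<bar> \<le> C"
    unfolding bounded_pos by auto
  have Cb: "\<bar>dF y\<bar> \<le> C" for y
    using CK[of y] dFK[of y] C0 by (cases "y \<in> K") auto
  define q where "q n x = (F (x + t n *\<^sub>R b) - F x) / t n" for n x
  have "(\<lambda>n. \<integral>x. q n x \<partial>lborel) \<longlonglongrightarrow> (\<integral>x. dF x \<partial>lborel)"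
  proof (rule integral_dominated_convergence[where w = "\<lambda>x. C * indicator (cball 0 (R + norm b)) x"])
    show "integrable lborel (\<lambda>x. C * indicator (cball 0 (R + norm b)) x)"
      using emeasure_bounded_finite[OF bounded_cball]
      by (intro integrable_mult_right integrable_real_indicator) auto
    show "AE x in lborel. (\<lambda>n. q n x) \<longlonglongrightarrow> dF x"
    proof (rule AE_I2)
      fix x
      have "((\<lambda>y. (F (x + y *\<^sub>R b) - F x) / y) \<longlongrightarrow> dF x) (at 0)"
        using der[of x 0] by (simp add: has_field_derivative_iff)
      moreover have "filterlim t (at 0) sequentially"
        using t0 t_pos by (intro filterlim_atI) (simp_all add: less_imp_neq[symmetric])
      ultimately show "(\<lambda>n. q n x) \<longlonglongrightarrow> dF x"
        unfolding q_def by (rule filterlim_compose)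
    qed
    show "AE x in lborel. norm (q n x) \<le> C * indicator (cball 0 (R + norm b)) x" for n
    proof (rule AE_I2)
      fix x
      show "norm (q n x) \<le> C * indicator (cball 0 (R + norm b)) x"
      proof (cases "x \<in> cball 0 (R + norm b)")
        case True
        then show ?thesis
          using difference_quotient_bound[OF der Cb t_pos] by (simp add: q_def)
      next
        case False
        then have "norm x > R + norm b" by simp
        note shift_notin_bounded[OF Rb this less_imp_le[OF t_pos[of n]] t_le_1[of n]]
        then show ?thesis
          using False C0 by (simp add: q_def FK)
      qed
    qed
  qed (simp_all add: q_def)
  then show ?thesis by (simp add: q_def)
qed

text \<open>Difference quotients have integral zero by translation invariance of \<open>lborel\<close>.\<close>

lemma integral_directional_derivative_eq_0:
  fixes F dF :: "'a::euclidean_space \<Rightarrow> real"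
  assumes K: "compact K" and FK: "\<And>x. x \<notin> K \<Longrightarrow> F x = 0" and dFK: "\<And>x. x \<notin> K \<Longrightarrow> dF x = 0"
    and cF: "continuous_on UNIV F" and cdF: "continuous_on UNIV dF"
    and der: "\<And>x s. ((\<lambda>s. F (x + s *\<^sub>R b)) has_real_derivative dF (x + s *\<^sub>R b)) (at s)"
  shows "(\<integral>x. dF x \<partial>lborel) = 0"
proof -
  define t where "t n = inverse (real (Suc n))" for n
  have t0: "t \<longlonglongrightarrow> 0" unfolding t_def by (rule LIMSEQ_inverse_real_of_nat)
  have t_pos: "0 < t n" and t_le_1: "t n \<le> 1" for n by (auto simp: t_def field_simps)
  note lim = integral_difference_quotient_tendsto[OF K FK dFK cF cdF der t0 t_pos t_le_1]
  have "F \<in> borel_measurable borel"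
    using cF by (rule borel_measurable_continuous_onI)
  moreover have "integrable lebesgue F"
    by (rule integrable_continuous_vanishing_outside_compact[OF cF K FK])
  ultimately have intF: "integrable lborel F" by (simp add: integrable_completion)
  have q0: "(\<integral>x. (F (x + t n *\<^sub>R b) - F x) / t n \<partial>lborel) = 0" for n
    using lborel_integral_translate[OF intF, of "t n *\<^sub>R b"] intF by (simp add: add.commute)
  show ?thesis
    using lim unfolding q0 by (simp add: LIMSEQ_const_iff)
qed

lemma integral_by_parts_C1c:
  assumes C: "C1c \<Omega> \<phi> D\<phi>" and P: "C1_with_deriv \<psi> \<psi>'"
  shows "(\<integral>x. (D\<phi> x \<bullet> b) * \<psi> x \<partial>lebesgue) = - (\<integral>x. \<phi> x * \<psi>' x b \<partial>lebesgue)"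
proof -
  let ?K = "closure {x. \<phi> x \<noteq> 0}"
  have K: "compact ?K" using C by (simp add: C1c_def)
  have cont: "continuous_on UNIV \<phi>" "continuous_on UNIV D\<phi>" "continuous_on UNIV \<psi>"
      "continuous_on UNIV (\<lambda>x. \<psi>' x b)"
    using C P C1c_continuous[OF C] C1_with_deriv_continuous[OF P]
    by (auto simp: C1c_def C1_with_deriv_def)
  note zero = C1c_eq_0_outside_support[OF C]
  define dF where "dF x = (D\<phi> x \<bullet> b) * \<psi> x + \<phi> x * \<psi>' x b" for x
  have vanish: "(D\<phi> x \<bullet> b) * \<psi> x = 0" "\<phi> x * \<psi>' x b = 0" "\<phi> x * \<psi> x = 0" "dF x = 0"
    if "x \<notin> ?K" for x
    using zero[OF that] by (simp_all add: dF_def)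
  have int1: "integrable lebesgue (\<lambda>x. (D\<phi> x \<bullet> b) * \<psi> x)"
    by (rule integrable_continuous_vanishing_outside_compact[OF _ K vanish(1)])
       (use cont in \<open>intro continuous_intros\<close>)
  have int2: "integrable lebesgue (\<lambda>x. \<phi> x * \<psi>' x b)"
    by (rule integrable_continuous_vanishing_outside_compact[OF _ K vanish(2)])
       (use cont in \<open>intro continuous_intros\<close>)
  have "((\<lambda>s. \<phi> (x + s *\<^sub>R b) * \<psi> (x + s *\<^sub>R b)) has_real_derivative dF (x + s *\<^sub>R b)) (at s)"
    for x s
  proof -
    let ?y = "x + s *\<^sub>R b"
    have dprod: "((\<lambda>y. \<phi> y * \<psi> y) has_derivative (\<lambda>h. \<phi> ?y * \<psi>' ?y h + (D\<phi> ?y \<bullet> h) * \<psi> ?y)) (at ?y)"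
      using has_derivative_mult[of \<phi> "\<lambda>h. D\<phi> ?y \<bullet> h" ?y UNIV \<psi> "\<psi>' ?y"] C P
      by (simp add: C1c_def C1_with_deriv_def)
    have dline: "((\<lambda>s. x + s *\<^sub>R b) has_derivative (\<lambda>h. h *\<^sub>R b)) (at s)"
      by (auto intro!: derivative_eq_intros)
    have "((\<lambda>s. \<phi> (x + s *\<^sub>R b) * \<psi> (x + s *\<^sub>R b)) has_derivative
        (\<lambda>h. \<phi> ?y * \<psi>' ?y (h *\<^sub>R b) + (D\<phi> ?y \<bullet> (h *\<^sub>R b)) * \<psi> ?y)) (at s)"
      using has_derivative_compose[OF dline dprod] by (simp add: o_def)
    moreover have "(\<lambda>h. \<phi> ?y * \<psi>' ?y (h *\<^sub>R b) + (D\<phi> ?y \<bullet> (h *\<^sub>R b)) * \<psi> ?y) = (\<lambda>h. dF ?y * h)"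
      by (auto simp: dF_def C1_with_deriv_scaleR[OF P] algebra_simps)
    ultimately show ?thesis by (simp add: has_field_derivative_def)
  qed
  moreover have cdF: "continuous_on UNIV dF"
    unfolding dF_def using cont by (intro continuous_intros)
  moreover have "continuous_on UNIV (\<lambda>x. \<phi> x * \<psi> x)"
    using cont by (intro continuous_intros)
  ultimately have "(\<integral>x. dF x \<partial>lborel) = 0"
    by (intro integral_directional_derivative_eq_0[OF K vanish(3) vanish(4)])
  moreover have "dF \<in> borel_measurable borel"
    using cdF by (rule borel_measurable_continuous_onI)
  ultimately have "(\<integral>x. dF x \<partial>lebesgue) = 0"
    by (simp add: integral_completion)
  then show ?thesis
    using int1 int2 by (simp add: dF_def)
qed

lemma square_integrable_indicator_continuous:
  fixes k :: "'a::euclidean_space \<Rightarrow> 'b::euclidean_space"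
  assumes "bounded \<Omega>" "\<Omega> \<in> sets lebesgue" "continuous_on UNIV k"
  shows "integrable lebesgue (\<lambda>x. (norm (indicator \<Omega> x *\<^sub>R k x))\<^sup>2)"
proof -
  have "\<Omega> \<in> lmeasurable"
    using assms(1,2) by (rule bounded_set_imp_lmeasurable)
  then have fin: "emeasure lebesgue \<Omega> < \<infinity>"
    using fmeasurableD2 by (simp only: infinity_ennreal_def less_top[symmetric])
  have "bounded (k ` closure \<Omega>)"
    using assms(1,3) by (intro compact_imp_bounded compact_continuous_image)
      (auto intro: continuous_on_subset simp: compact_closure)
  then obtain C where C: "\<And>x. x \<in> \<Omega> \<Longrightarrow> norm (k x) \<le> C"
    unfolding bounded_iff using closure_subset by blast
  have [measurable]: "k \<in> borel_measurable lebesgue"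
    using assms(3) by (simp add: borel_measurable_continuous_onI measurable_completion)
  show ?thesis
  proof (rule Bochner_Integration.integrable_bound)
    show "integrable lebesgue (\<lambda>x. C\<^sup>2 * indicator \<Omega> x)"
      using assms(2) fin by (intro integrable_mult_right integrable_real_indicator)
    show "AE x in lebesgue. norm ((norm (indicator \<Omega> x *\<^sub>R k x))\<^sup>2) \<le> norm (C\<^sup>2 * indicator \<Omega> x)"
    proof (rule AE_I2)
      fix x
      show "norm ((norm (indicator \<Omega> x *\<^sub>R k x))\<^sup>2) \<le> norm (C\<^sup>2 * indicator \<Omega> x)"
      proof (cases "x \<in> \<Omega>")
        case True
        then have "(norm (k x))\<^sup>2 \<le> C\<^sup>2" using C by (intro power_mono) auto
        then show ?thesis using True by simp
      qed simp
    qed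
  qed (use assms(2) in measurable)
qed

lemma H10_integral_by_parts:
  assumes H: "H10 \<Omega> u G" and bd: "bounded \<Omega>" and [measurable]: "\<Omega> \<in> sets lebesgue"
    and P: "C1_with_deriv \<psi> \<psi>'"
  shows "integrable lebesgue (\<lambda>x. G x \<bullet> (indicator \<Omega> x *\<^sub>R (\<psi> x *\<^sub>R b)))"
    "(\<integral>x. G x \<bullet> (indicator \<Omega> x *\<^sub>R (\<psi> x *\<^sub>R b)) \<partial>lebesgue)
       = - (\<integral>x. u x \<bullet> (indicator \<Omega> x *\<^sub>R \<psi>' x b) \<partial>lebesgue)"
proof -
  obtain \<phi> D\<phi> where C: "\<And>n. C1c \<Omega> (\<phi> n) (D\<phi> n)"
    and l1: "(\<lambda>n. L2_sqdist (\<phi> n) u lebesgue) \<longlonglongrightarrow> 0" and l2: "(\<lambda>n. L2_sqdist (D\<phi> n) G lebesgue) \<longlonglongrightarrow> 0"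
    using H10E[OF H] by blast
  note [measurable] = H10_measurable[OF H] C1c_measurable[OF C]
  have c1: "continuous_on UNIV (\<lambda>x. \<psi> x *\<^sub>R b)" and c2: "continuous_on UNIV (\<lambda>x. \<psi>' x b)"
    using C1_with_deriv_continuous[OF P] P by (auto simp: C1_with_deriv_def intro: continuous_intros)
  define k1 where "k1 x = indicator \<Omega> x *\<^sub>R (\<psi> x *\<^sub>R b)" for x
  define k2 where "k2 x = indicator \<Omega> x *\<^sub>R \<psi>' x b" for x
  have [measurable]: "(\<lambda>x. \<psi> x *\<^sub>R b) \<in> borel_measurable lebesgue" "(\<lambda>x. \<psi>' x b) \<in> borel_measurable lebesgue"
    using c1 c2 by (simp_all add: borel_measurable_continuous_onI measurable_completion)
  have [measurable]: "k1 \<in> borel_measurable lebesgue" "k2 \<in> borel_measurable lebesgue"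
    unfolding k1_def[abs_def] k2_def[abs_def] by measurable
  have k1L: "integrable lebesgue (\<lambda>x. (norm (k1 x))\<^sup>2)"
    unfolding k1_def by (rule square_integrable_indicator_continuous[OF bd _ c1]) simp
  have k2L: "integrable lebesgue (\<lambda>x. (norm (k2 x))\<^sup>2)"
    unfolding k2_def by (rule square_integrable_indicator_continuous[OF bd _ c2]) simp
  have uL: "integrable lebesgue (\<lambda>x. (norm (u x))\<^sup>2)"
    using H10_square_integrable(1)[OF H] by simp
  note GL = H10_square_integrable(2)[OF H]
  have lim_G: "(\<lambda>n. \<integral>x. D\<phi> n x \<bullet> k1 x \<partial>lebesgue) \<longlonglongrightarrow> (\<integral>x. G x \<bullet> k1 x \<partial>lebesgue)"
    by (rule integral_inner_tendsto_if_L2_sqdist_tendsto[OF _ _ _ C1c_square_integrable(2)[OF C] GL k1L l2])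
       measurable
  have lim_u: "(\<lambda>n. \<integral>x. \<phi> n x \<bullet> k2 x \<partial>lebesgue) \<longlonglongrightarrow> (\<integral>x. u x \<bullet> k2 x \<partial>lebesgue)"
    by (rule integral_inner_tendsto_if_L2_sqdist_tendsto[OF _ _ _ C1c_square_integrable(1)[OF C] uL k2L l1])
       measurable
  have "(\<integral>x. D\<phi> n x \<bullet> k1 x \<partial>lebesgue) = - (\<integral>x. \<phi> n x \<bullet> k2 x \<partial>lebesgue)" for n
  proof -
    have eq: "D\<phi> n x \<bullet> k1 x = (D\<phi> n x \<bullet> b) * \<psi> x" "\<phi> n x \<bullet> k2 x = \<phi> n x * \<psi>' x b" for x
      using C1c_eq_0_outside[OF C, of x n] by (cases "x \<in> \<Omega>"; simp add: k1_def k2_def)+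
    show ?thesis
      unfolding eq by (rule integral_by_parts_C1c[OF C P])
  qed
  with tendsto_minus[OF lim_u]
  have "(\<lambda>n. \<integral>x. D\<phi> n x \<bullet> k1 x \<partial>lebesgue) \<longlonglongrightarrow> - (\<integral>x. u x \<bullet> k2 x \<partial>lebesgue)"
    by simp
  with lim_G show "(\<integral>x. G x \<bullet> (indicator \<Omega> x *\<^sub>R (\<psi> x *\<^sub>R b)) \<partial>lebesgue)
      = - (\<integral>x. u x \<bullet> (indicator \<Omega> x *\<^sub>R \<psi>' x b) \<partial>lebesgue)"
    unfolding k1_def[symmetric] k2_def[symmetric] by (rule LIMSEQ_unique)
  show "integrable lebesgue (\<lambda>x. G x \<bullet> (indicator \<Omega> x *\<^sub>R (\<psi> x *\<^sub>R b)))"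
    unfolding k1_def[symmetric] by (rule integrable_inner_if_square_integrable[OF _ _ GL k1L]) measurable
qed

lemma L2_approx_by_polynomial_function:
  fixes W :: "'a::euclidean_space \<Rightarrow> 'b::euclidean_space"
  assumes bd: "bounded \<Omega>" and [measurable]: "\<Omega> \<in> sets lebesgue" and W: "continuous_on UNIV W"
  obtains P where "\<And>m. polynomial_function (P m)"
    "(\<lambda>m. L2_sqdist (\<lambda>x. indicator \<Omega> x *\<^sub>R P m x) (\<lambda>x. indicator \<Omega> x *\<^sub>R W x) lebesgue) \<longlonglongrightarrow> 0"
proof -
  define e where "e m = inverse (real (Suc m))" for m
  have e_pos: "e m > 0" for m by (simp add: e_def)
  have e0: "e \<longlonglongrightarrow> 0" unfolding e_def by (rule LIMSEQ_inverse_real_of_nat)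
  have "\<exists>P. polynomial_function P \<and> (\<forall>x\<in>closure \<Omega>. norm (W x - P x) < e m)" for m
    using bd W e_pos
    by (intro Stone_Weierstrass_polynomial_function) (auto simp: compact_closure intro: continuous_on_subset)
  then obtain P where P: "\<And>m. polynomial_function (P m)"
    and P_approx: "\<And>m x. x \<in> closure \<Omega> \<Longrightarrow> norm (W x - P m x) < e m"
    by metis
  have bound: "L2_sqdist (\<lambda>x. indicator \<Omega> x *\<^sub>R P m x) (\<lambda>x. indicator \<Omega> x *\<^sub>R W x) lebesgue
      \<le> emeasure lebesgue \<Omega> * ennreal ((e m)\<^sup>2)" for m
  proof -
    have "L2_sqdist (\<lambda>x. indicator \<Omega> x *\<^sub>R P m x) (\<lambda>x. indicator \<Omega> x *\<^sub>R W x) lebesgue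
        \<le> (\<integral>\<^sup>+x. ennreal ((e m)\<^sup>2) * indicator \<Omega> x \<partial>lebesgue)"
      unfolding L2_sqdist_def
    proof (intro nn_integral_mono)
      fix x
      show "ennreal ((norm (indicator \<Omega> x *\<^sub>R P m x - indicator \<Omega> x *\<^sub>R W x))\<^sup>2)
          \<le> ennreal ((e m)\<^sup>2) * indicator \<Omega> x"
      proof (cases "x \<in> \<Omega>")
        case True
        then have "norm (W x - P m x) < e m" using P_approx closure_subset by blast
        then have "(norm (P m x - W x))\<^sup>2 \<le> (e m)\<^sup>2"
          by (intro power_mono) (auto simp: norm_minus_commute)
        then show ?thesis using True by (simp add: ennreal_leI)
      qed simp
    qed
    also have "\<dots> = ennreal ((e m)\<^sup>2) * emeasure lebesgue \<Omega>"
      by (rule nn_integral_cmult_indicator) simp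
    finally show ?thesis by (simp add: mult.commute)
  qed
  have "emeasure lebesgue \<Omega> < top"
    using bounded_set_imp_lmeasurable[OF bd \<open>\<Omega> \<in> sets lebesgue\<close>] fmeasurableD2
    by (simp only: less_top[symmetric])
  then have "(\<lambda>m. emeasure lebesgue \<Omega> * ennreal ((e m)\<^sup>2)) \<longlonglongrightarrow> emeasure lebesgue \<Omega> * ennreal (0\<^sup>2)"
    by (intro ennreal_tendsto_cmult tendsto_ennrealI tendsto_power e0)
  then have lim0: "(\<lambda>m. emeasure lebesgue \<Omega> * ennreal ((e m)\<^sup>2)) \<longlonglongrightarrow> 0"
    by simp
  show thesis
  proof (rule that[OF P])
    show "(\<lambda>m. L2_sqdist (\<lambda>x. indicator \<Omega> x *\<^sub>R P m x) (\<lambda>x. indicator \<Omega> x *\<^sub>R W x) lebesgue) \<longlonglongrightarrow> 0"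
      by (rule tendsto_sandwich[OF always_eventually always_eventually tendsto_const lim0])
         (simp, rule allI, rule bound)
  qed
qed

lemma orthogonal_continuous_if_orthogonal_polynomial:
  fixes N W :: "'a::euclidean_space \<Rightarrow> 'b::euclidean_space"
  assumes bd: "bounded \<Omega>" and [measurable]: "\<Omega> \<in> sets lebesgue" "N \<in> borel_measurable lebesgue"
    and NL: "integrable lebesgue (\<lambda>x. (norm (N x))\<^sup>2)"
    and poly: "\<And>P. polynomial_function P \<Longrightarrow> (\<integral>x. N x \<bullet> (indicator \<Omega> x *\<^sub>R P x) \<partial>lebesgue) = 0"
    and W: "continuous_on UNIV W"
  shows "(\<integral>x. N x \<bullet> (indicator \<Omega> x *\<^sub>R W x) \<partial>lebesgue) = 0"
proof -
  obtain P where P: "\<And>m. polynomial_function (P m)"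
    and lim: "(\<lambda>m. L2_sqdist (\<lambda>x. indicator \<Omega> x *\<^sub>R P m x) (\<lambda>x. indicator \<Omega> x *\<^sub>R W x) lebesgue)
      \<longlonglongrightarrow> 0"
    using L2_approx_by_polynomial_function[OF bd _ W] by auto
  have Pc: "continuous_on UNIV (P m)" for m
    using P by (rule continuous_on_polymonial_function)
  have [measurable]: "P m \<in> borel_measurable lebesgue" "W \<in> borel_measurable lebesgue" for m
    using Pc W by (simp_all add: borel_measurable_continuous_onI measurable_completion)
  have "(\<lambda>m. \<integral>x. (indicator \<Omega> x *\<^sub>R P m x) \<bullet> N x \<partial>lebesgue)
      \<longlonglongrightarrow> (\<integral>x. (indicator \<Omega> x *\<^sub>R W x) \<bullet> N x \<partial>lebesgue)"
    by (rule integral_inner_tendsto_if_L2_sqdist_tendsto[OF _ _ _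
          square_integrable_indicator_continuous[OF bd _ Pc] square_integrable_indicator_continuous[OF bd _ W]
          NL lim]) measurable
  then show ?thesis
    using poly[OF P] by (simp add: LIMSEQ_const_iff inner_commute)
qed

lemma H10_grad_diff_orthogonal_polynomial:
  fixes P :: "'a::euclidean_space \<Rightarrow> 'a"
  assumes H1: "H10 \<Omega> u G1" and H2: "H10 \<Omega> u G2" and bd: "bounded \<Omega>" and [measurable]: "\<Omega> \<in> sets lebesgue"
    and P: "polynomial_function P"
  shows "(\<integral>x. (G1 x - G2 x) \<bullet> (indicator \<Omega> x *\<^sub>R P x) \<partial>lebesgue) = 0"
proof -
  have comp: "integrable lebesgue (\<lambda>x. (G1 x - G2 x) \<bullet> (indicator \<Omega> x *\<^sub>R ((P x \<bullet> b) *\<^sub>R b)))"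
    "(\<integral>x. (G1 x - G2 x) \<bullet> (indicator \<Omega> x *\<^sub>R ((P x \<bullet> b) *\<^sub>R b)) \<partial>lebesgue) = 0" for b
  proof -
    have "real_polynomial_function (\<lambda>x. P x \<bullet> b)"
      using P by (simp add: polynomial_function_inner real_polynomial_function_eq)
    then obtain \<psi>' where \<psi>: "C1_with_deriv (\<lambda>x. P x \<bullet> b) \<psi>'"
      using real_polynomial_function_C1_with_deriv by blast
    note IBP1 = H10_integral_by_parts[OF H1 bd _ \<psi>, of b] and IBP2 = H10_integral_by_parts[OF H2 bd _ \<psi>, of b]
    show "integrable lebesgue (\<lambda>x. (G1 x - G2 x) \<bullet> (indicator \<Omega> x *\<^sub>R ((P x \<bullet> b) *\<^sub>R b)))"
      unfolding inner_diff_left using IBP1(1) IBP2(1) by simp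
    show "(\<integral>x. (G1 x - G2 x) \<bullet> (indicator \<Omega> x *\<^sub>R ((P x \<bullet> b) *\<^sub>R b)) \<partial>lebesgue) = 0"
      unfolding inner_diff_left using IBP1 IBP2 by (simp add: Bochner_Integration.integral_diff)
  qed
  have "(G1 x - G2 x) \<bullet> (indicator \<Omega> x *\<^sub>R P x)
      = (\<Sum>b\<in>Basis. (G1 x - G2 x) \<bullet> (indicator \<Omega> x *\<^sub>R ((P x \<bullet> b) *\<^sub>R b)))" for x
    by (subst (1) euclidean_representation[of "P x", symmetric])
       (simp add: scaleR_sum_right inner_sum_right)
  then have "(\<integral>x. (G1 x - G2 x) \<bullet> (indicator \<Omega> x *\<^sub>R P x) \<partial>lebesgue)
      = (\<Sum>b\<in>Basis. \<integral>x. (G1 x - G2 x) \<bullet> (indicator \<Omega> x *\<^sub>R ((P x \<bullet> b) *\<^sub>R b)) \<partial>lebesgue)"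
    using comp(1) by (simp add: Bochner_Integration.integral_sum)
  then show ?thesis
    using comp(2) by simp
qed

lemma integral_inner_H10_grad_eq_0:
  assumes H: "H10 \<Omega> u G" and [measurable]: "N \<in> borel_measurable lebesgue"
    and NL: "integrable lebesgue (\<lambda>x. (norm (N x))\<^sup>2)"
    and orth: "\<And>W. continuous_on UNIV W \<Longrightarrow> (\<integral>x. N x \<bullet> (indicator \<Omega> x *\<^sub>R W x) \<partial>lebesgue) = 0"
  shows "(\<integral>x. N x \<bullet> G x \<partial>lebesgue) = 0"
proof -
  obtain \<phi> D\<phi> where C: "\<And>n. C1c \<Omega> (\<phi> n) (D\<phi> n)" and l2: "(\<lambda>n. L2_sqdist (D\<phi> n) G lebesgue) \<longlonglongrightarrow> 0"
    using H10E[OF H] by blast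
  note [measurable] = H10_measurable(2)[OF H] C1c_measurable(2)[OF C]
  have "(\<lambda>n. \<integral>x. D\<phi> n x \<bullet> N x \<partial>lebesgue) \<longlonglongrightarrow> (\<integral>x. G x \<bullet> N x \<partial>lebesgue)"
    by (rule integral_inner_tendsto_if_L2_sqdist_tendsto[OF _ _ _ C1c_square_integrable(2)[OF C]
          H10_square_integrable(2)[OF H] NL l2]) measurable
  moreover have "(\<integral>x. D\<phi> n x \<bullet> N x \<partial>lebesgue) = 0" for n
  proof -
    have "indicator \<Omega> x *\<^sub>R D\<phi> n x = D\<phi> n x" for x
      using C1c_eq_0_outside(2)[OF C, of x n] by (cases "x \<in> \<Omega>") auto
    moreover have "continuous_on UNIV (D\<phi> n)"
      using C[of n] by (simp add: C1c_def)
    ultimately show ?thesis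
      using orth[of "D\<phi> n"] by (simp add: inner_commute)
  qed
  ultimately show ?thesis
    by (simp add: LIMSEQ_const_iff inner_commute)
qed

text \<open>The difference \<open>N\<close> of two weak gradients is orthogonal to all continuous vector fields on
  \<open>\<Omega>\<close>, hence to both gradients, which are \<open>L\<^sup>2\<close>-limits of such fields.\<close>

lemma H10_grad_unique:
  assumes H1: "H10 \<Omega> u G1" and H2: "H10 \<Omega> u G2" and bd: "bounded \<Omega>" and [measurable]: "\<Omega> \<in> sets lebesgue"
  shows "AE x in lebesgue. G1 x = G2 x"
proof -
  define N where "N x = G1 x - G2 x" for x
  note [measurable] = H10_measurable(2)[OF H1] H10_measurable(2)[OF H2]
  note GL = H10_square_integrable(2)[OF H1] H10_square_integrable(2)[OF H2]
  have [measurable]: "N \<in> borel_measurable lebesgue" unfolding N_def[abs_def] by measurable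
  have NL: "integrable lebesgue (\<lambda>x. (norm (N x))\<^sup>2)"
    unfolding N_def by (rule integrable_norm_square_diff[OF _ _ GL]) measurable
  have orth: "(\<integral>x. N x \<bullet> (indicator \<Omega> x *\<^sub>R W x) \<partial>lebesgue) = 0" if W: "continuous_on UNIV W" for W
  proof (rule orthogonal_continuous_if_orthogonal_polynomial[OF bd _ _ NL _ W])
    show "(\<integral>x. N x \<bullet> (indicator \<Omega> x *\<^sub>R P x) \<partial>lebesgue) = 0" if "polynomial_function P" for P
      using H10_grad_diff_orthogonal_polynomial[OF H1 H2 bd assms(4) that] by (simp add: N_def)
  qed measurable
  have "(\<integral>x. (norm (N x))\<^sup>2 \<partial>lebesgue) = (\<integral>x. N x \<bullet> G1 x \<partial>lebesgue) - (\<integral>x. N x \<bullet> G2 x \<partial>lebesgue)"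
    using integrable_inner_if_square_integrable[OF _ _ NL GL(1)] integrable_inner_if_square_integrable[OF _ _ NL GL(2)]
    by (simp add: power2_norm_eq_inner N_def[of x for x] inner_diff_right flip: Bochner_Integration.integral_diff)
  also have "\<dots> = 0"
    using integral_inner_H10_grad_eq_0[OF H1 _ NL orth] integral_inner_H10_grad_eq_0[OF H2 _ NL orth] by simp
  finally have "AE x in lebesgue. (norm (N x))\<^sup>2 = 0"
    by (subst (asm) integral_nonneg_eq_0_iff_AE[OF NL]) auto
  then show ?thesis
    by eventually_elim (simp add: N_def)
qed

lemma H10_wgrad:
  assumes "v \<in> H10set \<Omega>"
  shows "H10 \<Omega> v (wgrad \<Omega> v)"
proof -
  from assms obtain G where "H10 \<Omega> v G" by (auto simp: H10set_def)
  then show ?thesis unfolding wgrad_def by (rule someI[of "H10 \<Omega> v"])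
qed

lemma wgrad_AE_eq:
  assumes "H10 \<Omega> v G" "bounded \<Omega>" "\<Omega> \<in> sets lebesgue"
  shows "AE x in lebesgue. wgrad \<Omega> v x = G x"
  using assms by (intro H10_grad_unique[OF H10_wgrad]) (auto simp: H10set_def)

section \<open>Positive and negative parts of the twisted eigenfunction\<close>

lemma integral_pos_if_pos_on_open:
  fixes f :: "'a::euclidean_space \<Rightarrow> real"
  assumes int: "integrable lebesgue f" and nonneg: "AE x in lebesgue. 0 \<le> f x"
    and S: "open S" "S \<noteq> {}" and pos: "AE x in lebesgue. x \<in> S \<longrightarrow> 0 < f x"
  shows "(\<integral>x. f x \<partial>lebesgue) > 0"
proof -
  have "(\<integral>x. f x \<partial>lebesgue) \<noteq> 0"
  proof
    assume "(\<integral>x. f x \<partial>lebesgue) = 0"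
    then have "AE x in lebesgue. f x = 0"
      using integral_nonneg_eq_0_iff_AE[OF int nonneg] by simp
    with pos have "AE x \<in> S in lebesgue. x \<in> {}"
      by eventually_elim auto
    moreover obtain y where "y \<in> S" using S(2) by blast
    ultimately show False
      using mem_closed_if_AE_lebesgue_open[OF S(1) closed_empty] by blast
  qed
  moreover have "(\<integral>x. f x \<partial>lebesgue) \<ge> 0"
    using nonneg by (rule integral_nonneg_AE)
  ultimately show ?thesis by linarith
qed

lemma integrable_bounded_mult_square_integrable:
  fixes g w :: "'x \<Rightarrow> real"
  assumes [measurable]: "g \<in> borel_measurable M" "w \<in> borel_measurable M" "\<Omega> \<in> sets M"
    and "emeasure M \<Omega> < \<infinity>" "AE x in M. \<bar>g x\<bar> \<le> 1" "integrable M (\<lambda>x. (w x)\<^sup>2)"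
    and "\<And>x. x \<notin> \<Omega> \<Longrightarrow> w x = 0"
  shows "integrable M (\<lambda>x. g x * w x)"
proof (rule Bochner_Integration.integrable_bound)
  show "integrable M (\<lambda>x. (w x)\<^sup>2 + indicator \<Omega> x)"
    using assms(3,4,6) by (intro Bochner_Integration.integrable_add integrable_real_indicator)
  show "AE x in M. norm (g x * w x) \<le> norm ((w x)\<^sup>2 + indicator \<Omega> x)"
    using assms(5)
  proof eventually_elim
    case (elim x)
    have "\<bar>g x * w x\<bar> \<le> \<bar>w x\<bar>"
      using mult_right_mono[OF elim abs_ge_zero[of "w x"]] by (simp add: abs_mult)
    also have "\<dots> \<le> (w x)\<^sup>2 + indicator \<Omega> x"
    proof (cases "x \<in> \<Omega>")
      case True
      have "\<bar>w x\<bar> \<le> (w x)\<^sup>2 + 1"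
        using sum_squares_bound[of "\<bar>w x\<bar>" 1] by (simp add: power2_abs)
      then show ?thesis using True by simp
    qed (simp add: assms(7))
    finally show ?case by simp
  qed
qed measurable

lemma positive_part_integrals_pos:
  fixes \<Omega> :: "'a::euclidean_space set" and u g :: "'a \<Rightarrow> real"
  defines "w \<equiv> \<lambda>x. if x \<in> \<Omega> \<and> 0 < u x then u x else 0"
  assumes H: "H10 \<Omega> u G" and "open \<Omega>" "bounded \<Omega>" "continuous_on \<Omega> u" "{x \<in> \<Omega>. 0 < u x} \<noteq> {}"
    and [measurable]: "g \<in> borel_measurable lebesgue" and g: "AE x in lebesgue. 0 < g x \<and> g x \<le> 1"
  shows "(\<integral>x. (w x)\<^sup>2 \<partial>lebesgue) > 0" "(\<integral>x. g x * w x \<partial>lebesgue) > 0"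
proof -
  have [measurable]: "\<Omega> \<in> sets lebesgue" using \<open>open \<Omega>\<close> by simp
  note [measurable] = H10_measurable(1)[OF H]
  have w_nonneg: "0 \<le> w x" for x by (simp add: w_def)
  have S: "open {x \<in> \<Omega>. 0 < u x}"
    using continuous_open_preimage[OF \<open>continuous_on \<Omega> u\<close> \<open>open \<Omega>\<close> open_greaterThan, of 0]
    by (simp add: vimage_def Int_def conj_commute)
  have wS: "0 < w x" if "x \<in> {x \<in> \<Omega>. 0 < u x}" for x
    using that by (simp add: w_def)
  have wL: "integrable lebesgue (\<lambda>x. (w x)\<^sup>2)"
  proof (rule Bochner_Integration.integrable_bound[OF H10_square_integrable(1)[OF H]])
    show "AE x in lebesgue. norm ((w x)\<^sup>2) \<le> norm ((u x)\<^sup>2)"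
      by (intro AE_I2) (simp add: w_def)
  qed (simp add: w_def)
  show "(\<integral>x. (w x)\<^sup>2 \<partial>lebesgue) > 0"
  proof (rule integral_pos_if_pos_on_open[OF wL _ S \<open>{x \<in> \<Omega>. 0 < u x} \<noteq> {}\<close>])
    have "0 < (w x)\<^sup>2" if "x \<in> {x \<in> \<Omega>. 0 < u x}" for x
      using wS[OF that] by simp
    then show "AE x in lebesgue. x \<in> {x \<in> \<Omega>. 0 < u x} \<longrightarrow> 0 < (w x)\<^sup>2"
      by (intro AE_I2 impI)
  qed simp
  have fin: "emeasure lebesgue \<Omega> < \<infinity>"
    using lmeasurable_open[OF \<open>bounded \<Omega>\<close> \<open>open \<Omega>\<close>] fmeasurableD2
    by (simp only: infinity_ennreal_def less_top[symmetric])
  have gb: "AE x in lebesgue. \<bar>g x\<bar> \<le> 1"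
    using g by eventually_elim simp
  have "integrable lebesgue (\<lambda>x. g x * w x)"
  proof (rule integrable_bounded_mult_square_integrable[OF _ _ _ fin gb wL])
    show "w x = 0" if "x \<notin> \<Omega>" for x using that by (simp add: w_def)
  qed (unfold w_def, measurable)
  then show "(\<integral>x. g x * w x \<partial>lebesgue) > 0"
    by (rule integral_pos_if_pos_on_open[OF _ _ S \<open>{x \<in> \<Omega>. 0 < u x} \<noteq> {}\<close>])
       (use g wS w_nonneg in \<open>auto elim!: eventually_mono\<close>)
qed

text \<open>The hypothesis \<open>eq\<close> is the weak Euler--Lagrange equation tested with the positive part \<open>w\<close>.\<close>

lemma Rq_positive_part:
  fixes \<Omega> :: "'a::euclidean_space set" and u g :: "'a \<Rightarrow> real"
  defines "w \<equiv> \<lambda>x. if x \<in> \<Omega> \<and> 0 < u x then u x else 0"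
  assumes H: "H10 \<Omega> u G" and bd: "bounded \<Omega>" and [measurable]: "\<Omega> \<in> sets lebesgue"
    and eq: "(\<integral>x. G x \<bullet> wgrad \<Omega> w x \<partial>lebesgue)
      = L * (\<integral>x. u x * w x \<partial>lebesgue) + c * (\<integral>x. g x * w x \<partial>lebesgue)"
    and nz: "(\<integral>x. (w x)\<^sup>2 \<partial>lebesgue) \<noteq> 0"
  shows "Rq \<Omega> w = L + c * ((\<integral>x. g x * w x \<partial>lebesgue) / (\<integral>x. (w x)\<^sup>2 \<partial>lebesgue))"
proof -
  define Gw where "Gw x = (if x \<in> \<Omega> \<and> 0 < u x then G x else 0)" for x
  have Hw: "H10 \<Omega> w Gw"
    unfolding w_def Gw_def by (rule H10_positive_part[OF H]) simp
  have ae: "AE x in lebesgue. wgrad \<Omega> w x = Gw x"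
    by (rule wgrad_AE_eq[OF Hw bd]) simp
  have "w \<in> H10set \<Omega>" using Hw by (auto simp: H10set_def)
  note [measurable] = H10_measurable(2)[OF H] H10_measurable(2)[OF Hw] H10_measurable(2)[OF H10_wgrad[OF this]]
  have "(\<integral>x. G x \<bullet> wgrad \<Omega> w x \<partial>lebesgue) = (\<integral>x. (norm (Gw x))\<^sup>2 \<partial>lebesgue)"
  proof (rule integral_cong_AE)
    show "AE x in lebesgue. G x \<bullet> wgrad \<Omega> w x = (norm (Gw x))\<^sup>2"
      using ae by eventually_elim (simp add: Gw_def power2_norm_eq_inner)
  qed measurable
  moreover have "(\<integral>x. (norm (wgrad \<Omega> w x))\<^sup>2 \<partial>lebesgue) = (\<integral>x. (norm (Gw x))\<^sup>2 \<partial>lebesgue)"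
  proof (rule integral_cong_AE)
    show "AE x in lebesgue. (norm (wgrad \<Omega> w x))\<^sup>2 = (norm (Gw x))\<^sup>2"
      using ae by eventually_elim simp
  qed measurable
  moreover have "(\<integral>x. u x * w x \<partial>lebesgue) = (\<integral>x. (w x)\<^sup>2 \<partial>lebesgue)"
    by (rule Bochner_Integration.integral_cong) (auto simp: w_def power2_eq_square)
  ultimately show ?thesis
    using eq nz by (simp add: Rq_def field_simps)
qed

lemma Rq_positive_part_of_weak_solution:
  fixes \<Omega> :: "'a::euclidean_space set" and u g :: "'a \<Rightarrow> real"
  defines "w \<equiv> \<lambda>x. if x \<in> \<Omega> \<and> 0 < u x then u x else 0"
  assumes H: "H10 \<Omega> u G" and \<Omega>: "open \<Omega>" "bounded \<Omega>"
    and u: "continuous_on \<Omega> u" "{x \<in> \<Omega>. 0 < u x} \<noteq> {}"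
    and g: "g \<in> borel_measurable lebesgue" "AE x in lebesgue. 0 < g x \<and> g x \<le> 1"
    and weak: "\<forall>\<psi>\<in>H10set \<Omega>. (\<integral>x. G x \<bullet> wgrad \<Omega> \<psi> x \<partial>lebesgue)
      = L * (\<integral>x. u x * \<psi> x \<partial>lebesgue) + c * (\<integral>x. g x * \<psi> x \<partial>lebesgue)"
  shows "\<exists>A>0. Rq \<Omega> w = L + c * A"
proof -
  let ?w = "\<lambda>x. if x \<in> \<Omega> \<and> 0 < u x then u x else 0"
  have "\<Omega> \<in> sets lebesgue" using \<Omega>(1) by simp
  have "?w \<in> H10set \<Omega>"
    using H10_positive_part[OF H \<open>\<Omega> \<in> sets lebesgue\<close>] unfolding H10set_def by blast
  note pos = positive_part_integrals_pos[OF H \<Omega> u g]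
  have "Rq \<Omega> ?w = L + c * ((\<integral>x. g x * ?w x \<partial>lebesgue) / (\<integral>x. (?w x)\<^sup>2 \<partial>lebesgue))"
    using Rq_positive_part[OF H \<Omega>(2) \<open>\<Omega> \<in> sets lebesgue\<close>, of L c g] bspec[OF weak \<open>?w \<in> H10set \<Omega>\<close>] pos
    by simp
  then show ?thesis
    unfolding w_def using pos
    by (intro exI[of _ "(\<integral>x. g x * ?w x \<partial>lebesgue) / (\<integral>x. (?w x)\<^sup>2 \<partial>lebesgue)"]) simp
qed

theorem proposition2p5:
  fixes \<Omega> :: "'a::euclidean_space set" and g u :: "'a \<Rightarrow> real" and \<xi> :: real
  assumes "open \<Omega>" and "bounded \<Omega>"
    and "g \<in> borel_measurable lebesgue"
    and "AE x in lebesgue. 0 < g x \<and> g x \<le> 1"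
    and "twisted_eigenfunction \<Omega> g u"
    and "continuous_on \<Omega> u"
    and "nodal_domains \<Omega> u = {{x \<in> \<Omega>. u x > 0}, {x \<in> \<Omega>. u x < 0}}"
    and "\<forall>\<psi>\<in>H10set \<Omega>.
           (\<integral> x. wgrad \<Omega> u x \<bullet> wgrad \<Omega> \<psi> x \<partial>lebesgue)
             = lambda1g \<Omega> g * (\<integral> x. u x * \<psi> x \<partial>lebesgue) + \<xi> * (\<integral> x. g x * \<psi> x \<partial>lebesgue)"
  shows "(Rq \<Omega> (\<lambda>x. if x \<in> \<Omega> \<and> u x > 0 then u x else 0)
            \<le> Rq \<Omega> (\<lambda>x. if x \<in> \<Omega> \<and> u x < 0 then - u x else 0) \<longleftrightarrow> \<xi> \<le> 0)
       \<and> (Rq \<Omega> (\<lambda>x. if x \<in> \<Omega> \<and> u x > 0 then u x else 0)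
            = Rq \<Omega> (\<lambda>x. if x \<in> \<Omega> \<and> u x < 0 then - u x else 0) \<longleftrightarrow> \<xi> = 0)"
proof -
  let ?L = "lambda1g \<Omega> g"
  have "u \<in> H10set \<Omega>"
    using assms(5) by (simp add: twisted_eigenfunction_def twisted_adm_def)
  then have Hu: "H10 \<Omega> u (wgrad \<Omega> u)" by (rule H10_wgrad)
  have "{x \<in> \<Omega>. u x > 0} \<in> components {x \<in> \<Omega>. u x \<noteq> 0}"
    "{x \<in> \<Omega>. u x < 0} \<in> components {x \<in> \<Omega>. u x \<noteq> 0}"
    using assms(7) by (auto simp: nodal_domains_def)
  from this[THEN in_components_nonempty]
  have domains: "{x \<in> \<Omega>. 0 < u x} \<noteq> {}" "{x \<in> \<Omega>. 0 < - u x} \<noteq> {}"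
    by simp_all
  obtain A where A: "A > 0" "Rq \<Omega> (\<lambda>x. if x \<in> \<Omega> \<and> u x > 0 then u x else 0) = ?L + \<xi> * A"
    using Rq_positive_part_of_weak_solution[OF Hu assms(1,2,6) domains(1) assms(3,4,8)] by blast
  \<comment> \<open>\<open>u\<^sup>-\<close> is the positive part of \<open>-u\<close>, which solves the same equation with \<open>-\<xi>\<close>\<close>
  have "continuous_on \<Omega> (\<lambda>x. - u x)" using assms(6) by (intro continuous_intros)
  moreover have "\<forall>\<psi>\<in>H10set \<Omega>. (\<integral>x. - wgrad \<Omega> u x \<bullet> wgrad \<Omega> \<psi> x \<partial>lebesgue)
      = ?L * (\<integral>x. - u x * \<psi> x \<partial>lebesgue) + - \<xi> * (\<integral>x. g x * \<psi> x \<partial>lebesgue)"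
    using assms(8) by simp
  ultimately have "\<exists>B>0. Rq \<Omega> (\<lambda>x. if x \<in> \<Omega> \<and> 0 < - u x then - u x else 0) = ?L + - \<xi> * B"
    by (rule Rq_positive_part_of_weak_solution[OF H10_uminus[OF Hu] assms(1,2) _ domains(2) assms(3,4)])
  then obtain B where B: "B > 0" "Rq \<Omega> (\<lambda>x. if x \<in> \<Omega> \<and> u x < 0 then - u x else 0) = ?L + - \<xi> * B"
    by auto
  have "?L + \<xi> * A \<le> ?L + - \<xi> * B \<longleftrightarrow> \<xi> * (A + B) \<le> 0"
    "?L + \<xi> * A = ?L + - \<xi> * B \<longleftrightarrow> \<xi> * (A + B) = 0"
    by (simp_all add: algebra_simps)
  with \<open>A > 0\<close> \<open>B > 0\<close> show ?thesis
    unfolding A(2) B(2) by (simp add: mult_le_0_iff)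
qed

end
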